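(* Let $K$ be a field of characteristic $p$, $q$ a power of $p$, $A=\mathbb{F}_q[T]$, $F=\mathbb{F}_q(T)$, $\iota:A\to K$ an $\mathbb{F}_q$-algebra homomorphism, and let $\phi:F\to K(\tau)$ be the extension of the Carlitz module, $\phi(a/b)=\phi(b)^{-1}\phi(a)$. Give $F$ the language $\mathcal{L}_T=\{0,1,T,+,\cdot\}$ and $K(\tau)$ the language $\mathcal{L}_{\tau,\iota}=\{0,1,\iota(T),\tau,+,\cdot\}$. Then $\phi:F\to K(\tau)$ is an effective Diophantine map.
   Context: $K\{\tau\}$ is the twisted polynomial ring (polynomials $\sum a_i\tau^i$ with $\tau a=a^q\tau$), $K(\tau)$ its left division ring of fractions. The Carlitz module is the $\mathbb{F}_q$-algebra homomorphism $\phi:A\to K\{\tau\}$ with $\phi_T=\iota(T)+\tau$. For a set $R$ with language $\mathcal{L}$, $S\subset R^k$ is Diophantine if $S=\{\vec x\mid\exists\vec y\ (f_1\wedge\dots\wedge f_r)\}$ with basic formulas $f_i$ of the form $(t_1,\dots,t_m)\in S'$, $S'$ a relation or equality and $t_j$ terms of $\mathcal{L}$. A map $d:R_1\to R_2$ is Diophantine if coordinatewise images of Diophantine sets are Diophantine; effective if a Diophantine definition of $d(S)$ can be algorithmically computed from one of $S$. *)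

theory Defs
  imports "HOL-Computational_Algebra.Polynomial" "HOL-Computational_Algebra.Fraction_Field"
          "HOL-Library.Nat_Bijection"
begin

text \<open>A basic formula is an equation between terms
  (the languages under consideration have no relation symbols besides =).\<close>

datatype tm = Var nat | Cst nat | Add tm tm | Mul tm tm

fun eval_tm :: "(nat \<Rightarrow> 'a::{plus,times}) \<Rightarrow> 'a list \<Rightarrow> tm \<Rightarrow> 'a" where
  "eval_tm c v (Var i) = v ! i"
| "eval_tm c v (Cst j) = c j"
| "eval_tm c v (Add s t) = eval_tm c v s + eval_tm c v t"
| "eval_tm c v (Mul s t) = eval_tm c v s * eval_tm c v t"

fun vars_tm :: "tm \<Rightarrow> nat set" where
  "vars_tm (Var i) = {i}"
| "vars_tm (Cst j) = {}"
| "vars_tm (Add s t) = vars_tm s \<union> vars_tm t"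
| "vars_tm (Mul s t) = vars_tm s \<union> vars_tm t"

fun csts_tm :: "tm \<Rightarrow> nat set" where
  "csts_tm (Var i) = {}"
| "csts_tm (Cst j) = {j}"
| "csts_tm (Add s t) = csts_tm s \<union> csts_tm t"
| "csts_tm (Mul s t) = csts_tm s \<union> csts_tm t"

text \<open>A Diophantine definition is a triple (k, m, eqs): variables 0..k-1 are the
  free variables x, variables k..k+m-1 are the existentially quantified y, and
  eqs is the list of basic formulas (equations) in the conjunction.\<close>

type_synonym ddef = "nat \<times> nat \<times> (tm \<times> tm) list"

definition wf_ddef :: "nat \<Rightarrow> ddef \<Rightarrow> bool" where
  "wf_ddef nc d = (case d of (k, m, eqs) \<Rightarrow>
     (\<forall>(s,t)\<in>set eqs. vars_tm s \<union> vars_tm t \<subseteq> {..<k+m} \<and> csts_tm s \<union> csts_tm t \<subseteq> {..<nc}))"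

text \<open>The subset of R^k (tuples as lists of length k) defined by d, in the structure
  whose universe is the whole type and whose constants are interpreted by c.\<close>

definition dioph_set :: "(nat \<Rightarrow> 'a::{plus,times}) \<Rightarrow> ddef \<Rightarrow> 'a list set" where
  "dioph_set c d = (case d of (k, m, eqs) \<Rightarrow>
     {xs. length xs = k \<and> (\<exists>ys. length ys = m \<and>
        (\<forall>(s,t)\<in>set eqs. eval_tm c (xs @ ys) s = eval_tm c (xs @ ys) t))})"

definition is_dioph :: "(nat \<Rightarrow> 'a::{plus,times}) \<Rightarrow> nat \<Rightarrow> nat \<Rightarrow> 'a list set \<Rightarrow> bool" where
  "is_dioph c nc k S = (S \<subseteq> {xs. length xs = k} \<and>
     (\<exists>m eqs. wf_ddef nc (k, m, eqs) \<and> S = dioph_set c (k, m, eqs)))"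

definition dioph_map ::
  "(nat \<Rightarrow> 'a::{plus,times}) \<Rightarrow> nat \<Rightarrow> (nat \<Rightarrow> 'b::{plus,times}) \<Rightarrow> nat \<Rightarrow> ('a \<Rightarrow> 'b) \<Rightarrow> bool" where
  "dioph_map c1 n1 c2 n2 f =
     (\<forall>k S. is_dioph c1 n1 k S \<longrightarrow> is_dioph c2 n2 k (map f ` S))"

fun enc_tm :: "tm \<Rightarrow> nat" where
  "enc_tm (Var i) = 4 * i"
| "enc_tm (Cst j) = 4 * j + 1"
| "enc_tm (Add s t) = 4 * prod_encode (enc_tm s, enc_tm t) + 2"
| "enc_tm (Mul s t) = 4 * prod_encode (enc_tm s, enc_tm t) + 3"

fun enc_eqs :: "(tm \<times> tm) list \<Rightarrow> nat" where
  "enc_eqs [] = 0"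
| "enc_eqs ((s,t) # es) = Suc (prod_encode (prod_encode (enc_tm s, enc_tm t), enc_eqs es))"

definition enc_ddef :: "ddef \<Rightarrow> nat" where
  "enc_ddef d = (case d of (k, m, eqs) \<Rightarrow> prod_encode (k, prod_encode (m, enc_eqs eqs)))"

datatype recf = Zer | SucF | Proj nat | Comp recf "recf list" | PrimRec recf recf | Minim recf

inductive rf_eval :: "recf \<Rightarrow> nat list \<Rightarrow> nat \<Rightarrow> bool" where
  rf_zer: "rf_eval Zer xs 0"
| rf_suc: "rf_eval SucF (x # xs) (Suc x)"
| rf_proj: "i < length xs \<Longrightarrow> rf_eval (Proj i) xs (xs ! i)"
| rf_comp: "list_all2 (\<lambda>g y. rf_eval g xs y) gs ys \<Longrightarrow> rf_eval f ys z \<Longrightarrow> rf_eval (Comp f gs) xs z"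
| rf_pr0: "rf_eval f xs y \<Longrightarrow> rf_eval (PrimRec f g) (0 # xs) y"
| rf_prS: "rf_eval (PrimRec f g) (n # xs) y \<Longrightarrow> rf_eval g (y # n # xs) z
           \<Longrightarrow> rf_eval (PrimRec f g) (Suc n # xs) z"
| rf_min: "rf_eval f (n # xs) 0 \<Longrightarrow> (\<forall>i<n. \<exists>y. 0 < y \<and> rf_eval f (i # xs) y)
           \<Longrightarrow> rf_eval (Minim f) xs n"

definition computable :: "(nat \<Rightarrow> nat) \<Rightarrow> bool" where
  "computable f = (\<exists>r. \<forall>n. rf_eval r [n] (f n))"

definition effective_dioph_map ::
  "(nat \<Rightarrow> 'a::{plus,times}) \<Rightarrow> nat \<Rightarrow> (nat \<Rightarrow> 'b::{plus,times}) \<Rightarrow> nat \<Rightarrow> ('a \<Rightarrow> 'b) \<Rightarrow> bool" where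
  "effective_dioph_map c1 n1 c2 n2 f =
     (\<exists>g. computable g \<and>
        (\<forall>d. wf_ddef n1 d \<longrightarrow>
           (\<exists>d'. g (enc_ddef d) = enc_ddef d' \<and> wf_ddef n2 d' \<and> fst d' = fst d \<and>
                 dioph_set c2 d' = map f ` dioph_set c1 d)))"

definition twisted_polys :: "('k \<Rightarrow> 'd::ring_1) \<Rightarrow> 'd \<Rightarrow> 'd set" where
  "twisted_polys e t = {(\<Sum>i<n. e (c i) * t ^ i) | c n. True}"

text \<open>D (with field embedding e and element t = \<tau>) is a left division ring of fractions
  of K{\<tau>} (\<tau> a = a^q \<tau>): the subring generated by e(K) and t is a copy of the twisted
  polynomial ring (t is "free" over e(K)), and every element of D is b^{-1} a with
  a, b in that copy.  This characterises K(\<tau>) up to isomorphism.\<close>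

definition is_left_twisted_fraction_ring :: "nat \<Rightarrow> ('k::field \<Rightarrow> 'd::division_ring) \<Rightarrow> 'd \<Rightarrow> bool" where
  "is_left_twisted_fraction_ring q e t =
     (inj e \<and> e 1 = 1 \<and> (\<forall>a b. e (a + b) = e a + e b) \<and> (\<forall>a b. e (a * b) = e a * e b) \<and>
      (\<forall>a. t * e a = e (a ^ q) * t) \<and>
      (\<forall>c n. (\<Sum>i<n. e (c i) * t ^ i) = 0 \<longrightarrow> (\<forall>i<n. c i = 0)) \<and>
      (\<forall>x. \<exists>a b. a \<in> twisted_polys e t \<and> b \<in> twisted_polys e t \<and> b \<noteq> 0 \<and> x = inverse b * a))"

text \<open>\<phi> : A \<rightarrow> K{\<tau>} \<subseteq> D, the F_q-algebra homomorphism with \<phi>_T = \<iota>(T) + \<tau>.\<close>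

definition carlitz :: "('q::field poly \<Rightarrow> 'k) \<Rightarrow> ('k \<Rightarrow> 'd::ring_1) \<Rightarrow> 'd \<Rightarrow> 'q poly \<Rightarrow> 'd" where
  "carlitz \<iota> e t a = (\<Sum>i\<le>degree a. e (\<iota> [:coeff a i:]) * (e (\<iota> [:0, 1:]) + t) ^ i)"

definition carlitz_F :: "('q::field poly \<Rightarrow> 'k) \<Rightarrow> ('k \<Rightarrow> 'd::division_ring) \<Rightarrow> 'd \<Rightarrow> 'q poly fract \<Rightarrow> 'd" where
  "carlitz_F \<iota> e t x = (let (a, b) = (SOME (a, b). b \<noteq> 0 \<and> x = Fract a b)
                        in inverse (carlitz \<iota> e t b) * carlitz \<iota> e t a)"

definition consts_F :: "nat \<Rightarrow> 'q::field poly fract" where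
  "consts_F j = (if j = 0 then 0 else if j = 1 then 1 else Fract [:0, 1:] 1)"

definition consts_D :: "('q::field poly \<Rightarrow> 'k) \<Rightarrow> ('k \<Rightarrow> 'd::ring_1) \<Rightarrow> 'd \<Rightarrow> nat \<Rightarrow> 'd" where
  "consts_D \<iota> e t j = (if j = 0 then 0 else if j = 1 then 1 else if j = 2 then e (\<iota> [:0, 1:]) else t)"

end

theory Submission
  imports Defs "HOL-Library.Cardinality"
begin

text \<open>
  The Carlitz module extends to an injective ring homomorphism \<open>\<phi> : F \<rightarrow> K(\<tau>)\<close>, and its
  image is exactly the centralizer of \<open>\<Phi> = \<phi>(T) = \<iota>(T) + \<tau>\<close>. Hence a Diophantine
  definition over \<open>F\<close> is transported by replacing the constant \<open>T\<close> with the term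
  \<open>\<iota>(T) + \<tau>\<close> and adding the equations \<open>x \<Phi> = \<Phi> x\<close> for all its variables: these force
  every variable into \<open>\<phi>(F)\<close>, where the translated equations hold iff the original ones do.
  The translation is a primitive recursive operation on codes, so the map is effective.

  For the centralizer, let \<open>z\<close> commute with \<open>\<Phi>\<close> and let \<open>g \<in> K{\<tau>}\<close> be a denominator of
  \<open>z\<close> (\<open>g z \<in> K{\<tau>}\<close>) of least \<open>\<tau>\<close>-degree. Right division of \<open>g \<Phi>\<close> by \<open>g\<close> gives
  \<open>g \<Phi> = h g\<close>, so \<open>y = g z\<close> satisfies \<open>y \<Phi> = h y\<close>. For such intertwiners the ratio of
  leading coefficients is fixed by \<open>c \<mapsto> c\<^sup>q\<close>, hence lies in \<open>\<iota>(\<bbbF>\<^sub>q)\<close>; this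
  allows dividing \<open>y = g \<phi>(a) + r\<close> with an intertwining remainder \<open>r\<close> of smaller degree.
  Either \<open>r = 0\<close> and \<open>z = \<phi>(a)\<close>, or \<open>(z - \<phi>(a))\<^sup>-\<^sup>1\<close> has the denominator \<open>r\<close>,
  and induction on the degree applies.
\<close>

section \<open>Recursive functions of several arguments\<close>

definition rec_computable :: "nat \<Rightarrow> (nat list \<Rightarrow> nat) \<Rightarrow> bool" where
  "rec_computable k f \<longleftrightarrow> (\<exists>r. \<forall>xs. length xs = k \<longrightarrow> rf_eval r xs (f xs))"

lemma computable_if_rec_computable:
  assumes "rec_computable 1 (\<lambda>xs. f (xs ! 0))"
  shows "computable f"
proof -
  obtain r where "\<forall>xs. length xs = 1 \<longrightarrow> rf_eval r xs (f (xs ! 0))"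
    using assms unfolding rec_computable_def by blast
  then have "rf_eval r [n] (f n)" for n
    by (metis One_nat_def length_Cons list.size(3) nth_Cons_0)
  then show ?thesis unfolding computable_def by blast
qed

lemma rec_computable_cong:
  "rec_computable k f \<Longrightarrow> (\<And>xs. length xs = k \<Longrightarrow> f xs = g xs) \<Longrightarrow> rec_computable k g"
  unfolding rec_computable_def by auto

lemma rec_computable_nth: "i < k \<Longrightarrow> rec_computable k (\<lambda>xs. xs ! i)"
  unfolding rec_computable_def by (auto intro: rf_proj)

lemma rec_computable_compose:
  assumes "rec_computable (length gs) f" and "\<forall>g\<in>set gs. rec_computable k g"
  shows "rec_computable k (\<lambda>xs. f (map (\<lambda>g. g xs) gs))"
proof -
  obtain r where r: "\<forall>ys. length ys = length gs \<longrightarrow> rf_eval r ys (f ys)"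
    using assms(1) unfolding rec_computable_def by blast
  have "\<exists>rs. list_all2 (\<lambda>r g. \<forall>xs. length xs = k \<longrightarrow> rf_eval r xs (g xs)) rs gs"
    using assms(2)
  proof (induction gs)
    case (Cons g gs)
    then obtain rs where "list_all2 (\<lambda>r g. \<forall>xs. length xs = k \<longrightarrow> rf_eval r xs (g xs)) rs gs"
      by auto
    moreover obtain r where "\<forall>xs. length xs = k \<longrightarrow> rf_eval r xs (g xs)"
      using Cons.prems unfolding rec_computable_def by auto
    ultimately show ?case by (intro exI[of _ "r # rs"]) auto
  qed simp
  then obtain rs where rs: "list_all2 (\<lambda>r g. \<forall>xs. length xs = k \<longrightarrow> rf_eval r xs (g xs)) rs gs" ..
  have "rf_eval (Comp r rs) xs (f (map (\<lambda>g. g xs) gs))" if "length xs = k" for xs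
  proof (rule rf_comp)
    show "list_all2 (\<lambda>g y. rf_eval g xs y) rs (map (\<lambda>g. g xs) gs)"
      unfolding list_all2_map2 using rs by (rule list_all2_mono) (simp add: that)
  qed (use r in simp)
  then show ?thesis unfolding rec_computable_def by blast
qed

lemma rec_computable_compose1:
  "rec_computable 1 (\<lambda>ys. f (ys ! 0)) \<Longrightarrow> rec_computable k g \<Longrightarrow> rec_computable k (\<lambda>xs. f (g xs))"
  using rec_computable_compose[of "[g]" "\<lambda>ys. f (ys ! 0)" k] by simp

lemma rec_computable_compose2:
  "rec_computable 2 (\<lambda>ys. f (ys ! 0) (ys ! 1)) \<Longrightarrow> rec_computable k g \<Longrightarrow> rec_computable k h \<Longrightarrow>
    rec_computable k (\<lambda>xs. f (g xs) (h xs))"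
  using rec_computable_compose[of "[g, h]" "\<lambda>ys. f (ys ! 0) (ys ! 1)" k]
  by (simp add: numeral_2_eq_2)

lemma rec_computable_Suc: "rec_computable k g \<Longrightarrow> rec_computable k (\<lambda>xs. Suc (g xs))"
proof -
  have "rf_eval SucF xs (Suc (xs ! 0))" if "length xs = 1" for xs
    using that by (cases xs) (auto intro: rf_suc)
  then have "rec_computable 1 (\<lambda>ys. Suc (ys ! 0))"
    unfolding rec_computable_def by blast
  then show "rec_computable k g \<Longrightarrow> rec_computable k (\<lambda>xs. Suc (g xs))"
    by (rule rec_computable_compose1)
qed

lemma rec_computable_const: "rec_computable k (\<lambda>xs. c)"
proof (induction c)
  case 0
  show ?case unfolding rec_computable_def by (auto intro: rf_zer)
qed (rule rec_computable_Suc)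

lemma rec_computable_rec_nat:
  assumes "rec_computable k f" and "rec_computable (Suc (Suc k)) g"
  shows "rec_computable (Suc k) (\<lambda>xs. rec_nat (f (tl xs)) (\<lambda>n y. g (y # n # tl xs)) (hd xs))"
proof -
  obtain rf where rf: "\<forall>ys. length ys = k \<longrightarrow> rf_eval rf ys (f ys)"
    using assms(1) unfolding rec_computable_def by blast
  obtain rg where rg: "\<forall>ys. length ys = Suc (Suc k) \<longrightarrow> rf_eval rg ys (g ys)"
    using assms(2) unfolding rec_computable_def by blast
  have "rf_eval (PrimRec rf rg) (n # ys) (rec_nat (f ys) (\<lambda>n y. g (y # n # ys)) n)"
    if "length ys = k" for n ys
  proof (induction n)
    case 0
    show ?case using rf that by (simp add: rf_pr0)
  next
    case (Suc n)
    then show ?case using rg that by (auto intro: rf_prS)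
  qed
  then have "rf_eval (PrimRec rf rg) xs (rec_nat (f (tl xs)) (\<lambda>n y. g (y # n # tl xs)) (hd xs))"
    if "length xs = Suc k" for xs
    using that by (cases xs) auto
  then show ?thesis unfolding rec_computable_def by blast
qed

lemma rec_computable_Least:
  assumes "rec_computable (Suc k) f" and "\<And>xs. length xs = k \<Longrightarrow> \<exists>n. f (n # xs) = 0"
  shows "rec_computable k (\<lambda>xs. LEAST n. f (n # xs) = 0)"
proof -
  obtain r where r: "\<forall>ys. length ys = Suc k \<longrightarrow> rf_eval r ys (f ys)"
    using assms(1) unfolding rec_computable_def by blast
  have "rf_eval (Minim r) xs (LEAST n. f (n # xs) = 0)" if len: "length xs = k" for xs
  proof (rule rf_min)
    have "f ((LEAST n. f (n # xs) = 0) # xs) = 0"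
      using LeastI_ex[OF assms(2)[OF len]] .
    then show "rf_eval r ((LEAST n. f (n # xs) = 0) # xs) 0"
      using r len by (metis length_Cons)
    show "\<forall>i<(LEAST n. f (n # xs) = 0). \<exists>y>0. rf_eval r (i # xs) y"
    proof (intro allI impI)
      fix i assume "i < (LEAST n. f (n # xs) = 0)"
      then have "f (i # xs) \<noteq> 0" by (rule not_less_Least)
      then show "\<exists>y>0. rf_eval r (i # xs) y" using r len by auto
    qed
  qed
  then show ?thesis unfolding rec_computable_def by blast
qed

lemma rec_computable_primrec1:
  assumes "h 0 = c" and "\<And>n. h (Suc n) = g (h n) n"
    and "rec_computable 2 (\<lambda>ys. g (ys ! 0) (ys ! 1))"
  shows "rec_computable 1 (\<lambda>ys. h (ys ! 0))"
proof -
  have "rec_computable (Suc 0)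
      (\<lambda>xs. rec_nat c (\<lambda>n y. (\<lambda>ys. g (ys ! 0) (ys ! 1)) (y # n # tl xs)) (hd xs))"
    using rec_computable_rec_nat[OF rec_computable_const, where g = "\<lambda>ys. g (ys ! 0) (ys ! 1)"]
      assms(3) by (simp add: numeral_2_eq_2)
  moreover have "rec_nat c (\<lambda>n y. g y n) a = h a" for a
    by (induction a) (simp_all add: assms(1,2))
  ultimately show ?thesis
    by (auto elim!: rec_computable_cong simp: length_Suc_conv)
qed

lemma rec_computable_primrec2:
  assumes "\<And>y. h 0 y = f y" and "\<And>n y. h (Suc n) y = g (h n y) n y"
    and "rec_computable 1 (\<lambda>ys. f (ys ! 0))"
    and "rec_computable 3 (\<lambda>ys. g (ys ! 0) (ys ! 1) (ys ! 2))"
  shows "rec_computable 2 (\<lambda>ys. h (ys ! 0) (ys ! 1))"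
proof -
  have "rec_computable (Suc (Suc 0)) (\<lambda>xs. rec_nat ((\<lambda>ys. f (ys ! 0)) (tl xs))
      (\<lambda>n y. (\<lambda>ys. g (ys ! 0) (ys ! 1) (ys ! 2)) (y # n # tl xs)) (hd xs))"
    using rec_computable_rec_nat[of 1 "\<lambda>ys. f (ys ! 0)" "\<lambda>ys. g (ys ! 0) (ys ! 1) (ys ! 2)"]
      assms(3,4) by (simp add: numeral_3_eq_3)
  moreover have "rec_nat (f b) (\<lambda>n y. g y n b) a = h a b" for a b
    by (induction a) (simp_all add: assms(1,2))
  ultimately show ?thesis
    by (auto elim!: rec_computable_cong simp: length_Suc_conv numeral_2_eq_2)
qed

lemma rec_computable_add:
  "rec_computable k f \<Longrightarrow> rec_computable k g \<Longrightarrow> rec_computable k (\<lambda>xs. f xs + g xs)"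
proof -
  have "rec_computable 2 (\<lambda>ys. ys ! 0 + ys ! 1)"
    by (rule rec_computable_primrec2[where f = "\<lambda>y. y" and g = "\<lambda>r n y. Suc r"])
      (auto intro!: rec_computable_Suc rec_computable_nth)
  then show "rec_computable k f \<Longrightarrow> rec_computable k g \<Longrightarrow> ?thesis"
    by (rule rec_computable_compose2)
qed

lemma rec_computable_mult:
  "rec_computable k f \<Longrightarrow> rec_computable k g \<Longrightarrow> rec_computable k (\<lambda>xs. f xs * g xs)"
proof -
  have "rec_computable 2 (\<lambda>ys. ys ! 0 * ys ! 1)"
    by (rule rec_computable_primrec2[where f = "\<lambda>y. 0" and g = "\<lambda>r n y. r + y"])
      (auto intro!: rec_computable_add rec_computable_nth rec_computable_const)
  then show "rec_computable k f \<Longrightarrow> rec_computable k g \<Longrightarrow> ?thesis"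
    by (rule rec_computable_compose2)
qed

lemma rec_computable_diff:
  "rec_computable k f \<Longrightarrow> rec_computable k g \<Longrightarrow> rec_computable k (\<lambda>xs. f xs - g xs)"
proof -
  have "rec_computable 1 (\<lambda>ys. ys ! 0 - 1)"
    by (rule rec_computable_primrec1[where c = 0 and g = "\<lambda>r n. n"])
      (auto intro: rec_computable_nth)
  then have "rec_computable 3 (\<lambda>ys. ys ! 0 - 1)"
    by (rule rec_computable_compose1) (simp add: rec_computable_nth)
  then have "rec_computable 2 (\<lambda>ys. ys ! 1 - ys ! 0)"
    by (intro rec_computable_primrec2[where f = "\<lambda>y. y" and g = "\<lambda>r n y. r - 1"])
      (auto intro: rec_computable_nth)
  then have "rec_computable 2 (\<lambda>ys. ys ! 0 - ys ! 1)"
    by (rule rec_computable_compose2) (auto intro: rec_computable_nth)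
  then show "rec_computable k f \<Longrightarrow> rec_computable k g \<Longrightarrow> ?thesis"
    by (rule rec_computable_compose2)
qed

lemma rec_computable_if_eq:
  assumes "rec_computable k a" "rec_computable k b" "rec_computable k f" "rec_computable k g"
  shows "rec_computable k (\<lambda>xs. if a xs = b xs then f xs else g xs)"
proof -
  let ?d = "\<lambda>xs. 1 - ((a xs - b xs) + (b xs - a xs))"
  have "rec_computable k (\<lambda>xs. ?d xs * f xs + (1 - ?d xs) * g xs)"
    by (intro rec_computable_add rec_computable_mult rec_computable_diff rec_computable_const assms)
  then show ?thesis by (rule rec_computable_cong) auto
qed

lemma rec_computable_div:
  assumes "0 < c" and "rec_computable k f"
  shows "rec_computable k (\<lambda>xs. f xs div c)"
proof -
  have "rec_computable 1 (\<lambda>xs. LEAST q. (\<lambda>ys. Suc (ys ! 1) - c * Suc (ys ! 0)) (q # xs) = 0)"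
  proof (rule rec_computable_Least)
    show "rec_computable (Suc 1) (\<lambda>ys. Suc (ys ! 1) - c * Suc (ys ! 0))"
      by (intro rec_computable_diff rec_computable_Suc rec_computable_mult rec_computable_const
          rec_computable_nth) simp_all
    have "Suc x \<le> c * Suc x" for x using assms(1) by (cases c) auto
    then show "\<exists>q. (\<lambda>ys. Suc (ys ! 1) - c * Suc (ys ! 0)) (q # xs) = 0" for xs :: "nat list"
      by (intro exI[of _ "xs ! 0"]) simp
  qed
  moreover have "(LEAST q. Suc n - c * Suc q = 0) = n div c" for n
  proof (rule Least_equality)
    have "n < c * Suc (n div c)"
      using assms(1) by (metis dividend_less_times_div mult_Suc_right)
    then show "Suc n - c * Suc (n div c) = 0" by simp
  next
    fix q assume "Suc n - c * Suc q = 0"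
    then have "n < Suc q * c" by (simp add: mult.commute)
    then show "n div c \<le> q"
      using assms(1) by (simp add: div_less_iff_less_mult flip: less_Suc_eq_le)
  qed
  ultimately have "rec_computable 1 (\<lambda>xs. xs ! 0 div c)" by simp
  then show ?thesis using assms(2) by (rule rec_computable_compose1)
qed

lemma rec_computable_mod:
  assumes "0 < c" and "rec_computable k f"
  shows "rec_computable k (\<lambda>xs. f xs mod c)"
proof -
  have "rec_computable k (\<lambda>xs. f xs - c * (f xs div c))"
    by (intro rec_computable_diff rec_computable_mult rec_computable_const rec_computable_div assms)
  then show ?thesis by (rule rec_computable_cong) (simp add: minus_mult_div_eq_mod)
qed

lemma rec_computable_triangle: "rec_computable k f \<Longrightarrow> rec_computable k (\<lambda>xs. triangle (f xs))"
proof -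
  have "rec_computable 1 (\<lambda>ys. triangle (ys ! 0))"
    by (rule rec_computable_primrec1[where c = 0 and g = "\<lambda>r n. r + Suc n"])
      (auto intro!: rec_computable_add rec_computable_Suc rec_computable_nth)
  then show "rec_computable k f \<Longrightarrow> ?thesis" by (rule rec_computable_compose1)
qed

lemma rec_computable_prod_encode:
  assumes "rec_computable k f" "rec_computable k g"
  shows "rec_computable k (\<lambda>xs. prod_encode (f xs, g xs))"
proof -
  have "rec_computable k (\<lambda>xs. triangle (f xs + g xs) + f xs)"
    by (intro rec_computable_add rec_computable_triangle assms)
  then show ?thesis by (rule rec_computable_cong) (simp add: prod_encode_def)
qed

definition triangle_root :: "nat \<Rightarrow> nat" where
  "triangle_root n = (LEAST s. n < triangle (Suc s))"

lemma triangle_root_bounds: "triangle (triangle_root n) \<le> n \<and> n < triangle (Suc (triangle_root n))"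
proof
  show "n < triangle (Suc (triangle_root n))"
    unfolding triangle_root_def by (rule LeastI[where k = n]) simp
  show "triangle (triangle_root n) \<le> n"
  proof (cases "triangle_root n")
    case (Suc s)
    then have "\<not> n < triangle (Suc s)"
      unfolding triangle_root_def by (metis lessI not_less_Least)
    then show ?thesis using Suc by simp
  qed simp
qed

lemma prod_decode_eq_triangle_root:
  "prod_decode n = (n - triangle (triangle_root n), triangle_root n - (n - triangle (triangle_root n)))"
proof -
  let ?s = "triangle_root n"
  have "n - triangle ?s \<le> ?s" using triangle_root_bounds[of n] by simp linarith
  then have "prod_encode (n - triangle ?s, ?s - (n - triangle ?s)) = n"
    using triangle_root_bounds[of n] by (simp add: prod_encode_def)
  then show ?thesis by (metis prod_encode_inverse)
qed

lemma rec_computable_triangle_root: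
  "rec_computable k f \<Longrightarrow> rec_computable k (\<lambda>xs. triangle_root (f xs))"
proof -
  have "rec_computable 1 (\<lambda>xs. LEAST s. (\<lambda>ys. Suc (ys ! 1) - triangle (Suc (ys ! 0))) (s # xs) = 0)"
  proof (rule rec_computable_Least)
    show "rec_computable (Suc 1) (\<lambda>ys. Suc (ys ! 1) - triangle (Suc (ys ! 0)))"
      by (intro rec_computable_diff rec_computable_Suc rec_computable_triangle rec_computable_nth)
        simp_all
    show "\<exists>s. (\<lambda>ys. Suc (ys ! 1) - triangle (Suc (ys ! 0))) (s # xs) = 0" for xs :: "nat list"
      by (intro exI[of _ "xs ! 0"]) simp
  qed
  then have "rec_computable 1 (\<lambda>xs. triangle_root (xs ! 0))"
    by (simp add: triangle_root_def less_Suc_eq_le)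
  then show "rec_computable k f \<Longrightarrow> ?thesis" by (rule rec_computable_compose1)
qed

lemma rec_computable_fst_prod_decode:
  assumes "rec_computable k f"
  shows "rec_computable k (\<lambda>xs. fst (prod_decode (f xs)))"
proof -
  have "rec_computable k (\<lambda>xs. f xs - triangle (triangle_root (f xs)))"
    by (intro rec_computable_diff rec_computable_triangle rec_computable_triangle_root assms)
  then show ?thesis by (rule rec_computable_cong) (simp add: prod_decode_eq_triangle_root)
qed

lemma rec_computable_snd_prod_decode:
  assumes "rec_computable k f"
  shows "rec_computable k (\<lambda>xs. snd (prod_decode (f xs)))"
proof -
  have "rec_computable k (\<lambda>xs. triangle_root (f xs) - (f xs - triangle (triangle_root (f xs))))"
    by (intro rec_computable_diff rec_computable_triangle rec_computable_triangle_root assms)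
  then show ?thesis by (rule rec_computable_cong) (simp add: prod_decode_eq_triangle_root)
qed

primrec history :: "(nat \<Rightarrow> nat) \<Rightarrow> nat \<Rightarrow> nat" where
  "history f 0 = 0"
| "history f (Suc n) = prod_encode (f n, history f n)"

definition history_nth :: "nat \<Rightarrow> nat \<Rightarrow> nat \<Rightarrow> nat" where
  "history_nth h n i = fst (prod_decode (((\<lambda>x. snd (prod_decode x)) ^^ (n - Suc i)) h))"

lemma history_nth_history: "i < n \<Longrightarrow> history_nth (history f n) n i = f i"
proof (induction n)
  case (Suc n)
  show ?case
  proof (cases "i = n")
    case False
    then have "i < n" and "Suc n - Suc i = Suc (n - Suc i)" using Suc.prems by auto
    then show ?thesis
      using Suc.IH unfolding history_nth_def by (simp only: funpow_Suc_right o_apply) simp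
  qed (simp add: history_nth_def)
qed simp

lemma rec_computable_history_nth:
  assumes "rec_computable k h" "rec_computable k n" "rec_computable k i"
  shows "rec_computable k (\<lambda>xs. history_nth (h xs) (n xs) (i xs))"
proof -
  have "rec_computable 2 (\<lambda>ys. ((\<lambda>x. snd (prod_decode x)) ^^ (ys ! 0)) (ys ! 1))"
    by (rule rec_computable_primrec2[where f = "\<lambda>y. y" and g = "\<lambda>r n y. snd (prod_decode r)"])
      (auto intro!: rec_computable_snd_prod_decode rec_computable_nth)
  then have "rec_computable k (\<lambda>xs. ((\<lambda>x. snd (prod_decode x)) ^^ (n xs - Suc (i xs))) (h xs))"
    by (rule rec_computable_compose2) (intro rec_computable_diff rec_computable_Suc assms)+
  then show ?thesis unfolding history_nth_def by (rule rec_computable_fst_prod_decode)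
qed

lemma rec_computable_course_of_values:
  assumes "rec_computable 2 (\<lambda>ys. S (ys ! 0) (ys ! 1))" and "\<And>n. f n = S n (history f n)"
  shows "rec_computable 1 (\<lambda>ys. f (ys ! 0))"
proof -
  have "rec_computable 1 (\<lambda>ys. history f (ys ! 0))"
  proof (rule rec_computable_primrec1[where c = 0 and g = "\<lambda>y n. prod_encode (S n y, y)"])
    show "rec_computable 2 (\<lambda>ys. prod_encode (S (ys ! 1) (ys ! 0), ys ! 0))"
      by (intro rec_computable_prod_encode rec_computable_compose2[OF assms(1)] rec_computable_nth)
        simp_all
  qed (simp_all flip: assms(2))
  then have "rec_computable 1 (\<lambda>ys. history f (Suc (ys ! 0)))"
    by (rule rec_computable_compose1) (simp add: rec_computable_Suc rec_computable_nth)
  then have "rec_computable 1 (\<lambda>ys. fst (prod_decode (history f (Suc (ys ! 0)))))"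
    by (rule rec_computable_fst_prod_decode)
  then show ?thesis by (rule rec_computable_cong) simp
qed

section \<open>Translating Diophantine definitions along the Carlitz module\<close>

definition carlitz_T_tm :: tm where
  "carlitz_T_tm = Add (Cst 2) (Cst 3)"

fun translate_tm :: "tm \<Rightarrow> tm" where
  "translate_tm (Var i) = Var i"
| "translate_tm (Cst j) = (if j = 2 then carlitz_T_tm else Cst j)"
| "translate_tm (Add s t) = Add (translate_tm s) (translate_tm t)"
| "translate_tm (Mul s t) = Mul (translate_tm s) (translate_tm t)"

primrec commute_eqs :: "nat \<Rightarrow> (tm \<times> tm) list" where
  "commute_eqs 0 = []"
| "commute_eqs (Suc j) = (Mul (Var j) carlitz_T_tm, Mul carlitz_T_tm (Var j)) # commute_eqs j"

definition translate_ddef :: "ddef \<Rightarrow> ddef" where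
  "translate_ddef d = (case d of (k, m, eqs) \<Rightarrow>
     (k, m, commute_eqs (k + m) @ map (map_prod translate_tm translate_tm) eqs))"

lemma set_commute_eqs:
  "set (commute_eqs n) = {(Mul (Var j) carlitz_T_tm, Mul carlitz_T_tm (Var j)) | j. j < n}"
  by (induction n) (auto simp: less_Suc_eq)

lemma wf_translate_ddef:
  assumes "wf_ddef 3 d"
  shows "wf_ddef 4 (translate_ddef d)"
proof -
  obtain k m eqs where d: "d = (k, m, eqs)" by (cases d)
  have vars: "vars_tm (translate_tm s) = vars_tm s" for s
    by (induction s) (auto simp: carlitz_T_tm_def)
  have csts: "csts_tm s \<subseteq> {..<3} \<Longrightarrow> csts_tm (translate_tm s) \<subseteq> {..<4}" for s
    by (induction s) (auto simp: carlitz_T_tm_def)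
  show ?thesis
    using assms unfolding d translate_ddef_def wf_ddef_def
    by (fastforce simp: set_commute_eqs carlitz_T_tm_def vars dest: csts)
qed

lemma fst_prod_decode_le: "fst (prod_decode n) \<le> n"
  by (metis le_prod_encode_1 prod_decode_inverse prod.collapse)

lemma snd_prod_decode_le: "snd (prod_decode n) \<le> n"
  by (metis le_prod_encode_2 prod_decode_inverse prod.collapse)

lemma prod_decode_div_4_less:
  assumes "\<not> n mod 4 < 2"
  shows "fst (prod_decode (n div 4)) < n" and "snd (prod_decode (n div 4)) < n"
proof -
  have "n div 4 < n" using assms by (cases "n = 0") auto
  then show "fst (prod_decode (n div 4)) < n" and "snd (prod_decode (n div 4)) < n"
    using fst_prod_decode_le snd_prod_decode_le by (auto intro: le_less_trans)
qed

(* enc_tm tags Var, Cst, Add and Mul by the residues 0, 1, 2 and 3 modulo 4. *)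
function translate_tm_code :: "nat \<Rightarrow> nat" where
  "translate_tm_code n =
     (if n mod 4 < 2 then (if n = enc_tm (Cst 2) then enc_tm carlitz_T_tm else n)
      else 4 * prod_encode (translate_tm_code (fst (prod_decode (n div 4))),
                            translate_tm_code (snd (prod_decode (n div 4)))) + n mod 4)"
  by pat_completeness auto
termination
  by (relation "measure id") (simp_all add: prod_decode_div_4_less)

declare translate_tm_code.simps [simp del]

lemma translate_tm_code_enc_tm: "translate_tm_code (enc_tm s) = enc_tm (translate_tm s)"
proof (induction s)
  case (Var i)
  have "4 * i \<noteq> 9" by presburger
  then show ?case by (subst translate_tm_code.simps) auto
next
  case (Cst j)
  show ?case by (subst translate_tm_code.simps) auto
next
  case (Add s t)
  have "(4 * x + 2) mod 4 = 2" "(4 * x + 2) div 4 = x" for x :: nat by presburger+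
  with Add show ?case by (subst translate_tm_code.simps) simp
next
  case (Mul s t)
  have "(4 * x + 3) mod 4 = 3" "(4 * x + 3) div 4 = x" for x :: nat by presburger+
  with Mul show ?case by (subst translate_tm_code.simps) simp
qed

lemma rec_computable_translate_tm_code:
  "rec_computable k f \<Longrightarrow> rec_computable k (\<lambda>xs. translate_tm_code (f xs))"
proof -
  define S where "S n h =
     (if n mod 4 < 2 then (if n = enc_tm (Cst 2) then enc_tm carlitz_T_tm else n)
      else 4 * prod_encode (history_nth h n (fst (prod_decode (n div 4))),
                            history_nth h n (snd (prod_decode (n div 4)))) + n mod 4)" for n h
  have "translate_tm_code n = S n (history translate_tm_code n)" for n
    by (subst translate_tm_code.simps) (simp add: S_def history_nth_history prod_decode_div_4_less)
  moreover have "rec_computable 2 (\<lambda>ys. S (ys ! 0) (ys ! 1))"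
  proof -
    have "rec_computable 2 (\<lambda>ys. if 2 - ys ! 0 mod 4 = 0
      then 4 * prod_encode (history_nth (ys ! 1) (ys ! 0) (fst (prod_decode (ys ! 0 div 4))),
                            history_nth (ys ! 1) (ys ! 0) (snd (prod_decode (ys ! 0 div 4)))) + ys ! 0 mod 4
      else if ys ! 0 = enc_tm (Cst 2) then enc_tm carlitz_T_tm else ys ! 0)"
      by (intro rec_computable_if_eq rec_computable_diff rec_computable_mod rec_computable_add
          rec_computable_mult rec_computable_prod_encode rec_computable_history_nth
          rec_computable_fst_prod_decode rec_computable_snd_prod_decode rec_computable_div
          rec_computable_const rec_computable_nth) simp_all
    then show ?thesis by (rule rec_computable_cong) (auto simp: S_def)
  qed
  ultimately have "rec_computable 1 (\<lambda>ys. translate_tm_code (ys ! 0))"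
    by (intro rec_computable_course_of_values)
  then show "rec_computable k f \<Longrightarrow> ?thesis" by (rule rec_computable_compose1)
qed

definition translate_eq_code :: "nat \<Rightarrow> nat" where
  "translate_eq_code n = prod_encode (translate_tm_code (fst (prod_decode n)),
                                      translate_tm_code (snd (prod_decode n)))"

function translate_eqs_code :: "nat \<Rightarrow> nat" where
  "translate_eqs_code n = (if n = 0 then 0 else
     Suc (prod_encode (translate_eq_code (fst (prod_decode (n - 1))),
                       translate_eqs_code (snd (prod_decode (n - 1))))))"
  by pat_completeness auto
termination
  by (relation "measure id") (auto intro: le_less_trans[OF snd_prod_decode_le])

declare translate_eqs_code.simps [simp del]

lemma translate_eqs_code_enc_eqs:
  "translate_eqs_code (enc_eqs eqs) = enc_eqs (map (map_prod translate_tm translate_tm) eqs)"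
  by (induction eqs) (subst translate_eqs_code.simps;
      auto simp: translate_eq_code_def translate_tm_code_enc_tm)+

lemma rec_computable_translate_eqs_code:
  "rec_computable k f \<Longrightarrow> rec_computable k (\<lambda>xs. translate_eqs_code (f xs))"
proof -
  define S where "S n h = (if n = 0 then 0 else
     Suc (prod_encode (translate_eq_code (fst (prod_decode (n - 1))),
                       history_nth h n (snd (prod_decode (n - 1))))))" for n h
  have "translate_eqs_code n = S n (history translate_eqs_code n)" for n
  proof (cases "n = 0")
    case False
    then have "snd (prod_decode (n - 1)) < n"
      using le_less_trans[OF snd_prod_decode_le, of "n - 1" n] by simp
    with False show ?thesis
      by (subst translate_eqs_code.simps) (simp add: S_def history_nth_history)
  qed (simp add: S_def translate_eqs_code.simps)
  moreover have "rec_computable 2 (\<lambda>ys. S (ys ! 0) (ys ! 1))"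
  proof -
    have "rec_computable 2 (\<lambda>ys. if ys ! 0 = 0 then 0 else
       Suc (prod_encode (translate_eq_code (fst (prod_decode (ys ! 0 - 1))),
                         history_nth (ys ! 1) (ys ! 0) (snd (prod_decode (ys ! 0 - 1))))))"
      unfolding translate_eq_code_def
      by (intro rec_computable_if_eq rec_computable_Suc rec_computable_prod_encode
          rec_computable_translate_tm_code rec_computable_history_nth rec_computable_diff
          rec_computable_fst_prod_decode rec_computable_snd_prod_decode
          rec_computable_const rec_computable_nth) simp_all
    then show ?thesis by (simp only: S_def)
  qed
  ultimately have "rec_computable 1 (\<lambda>ys. translate_eqs_code (ys ! 0))"
    by (intro rec_computable_course_of_values)
  then show "rec_computable k f \<Longrightarrow> ?thesis" by (rule rec_computable_compose1)
qed

primrec commute_eqs_code :: "nat \<Rightarrow> nat \<Rightarrow> nat" where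
  "commute_eqs_code 0 z = z"
| "commute_eqs_code (Suc j) z = Suc (prod_encode (prod_encode
     (enc_tm (Mul (Var j) carlitz_T_tm), enc_tm (Mul carlitz_T_tm (Var j))), commute_eqs_code j z))"

lemma commute_eqs_code_enc_eqs: "commute_eqs_code j (enc_eqs eqs) = enc_eqs (commute_eqs j @ eqs)"
  by (induction j) simp_all

lemma rec_computable_commute_eqs_code:
  assumes "rec_computable k f" "rec_computable k g"
  shows "rec_computable k (\<lambda>xs. commute_eqs_code (f xs) (g xs))"
proof -
  have "rec_computable 2 (\<lambda>ys. commute_eqs_code (ys ! 0) (ys ! 1))"
  proof (rule rec_computable_primrec2[where f = "\<lambda>z. z"
        and g = "\<lambda>r j z. Suc (prod_encode (prod_encode (4 * prod_encode (4 * j, enc_tm carlitz_T_tm) + 3,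
                  4 * prod_encode (enc_tm carlitz_T_tm, 4 * j) + 3), r))"])
    show "rec_computable 3 (\<lambda>ys. Suc (prod_encode (prod_encode
        (4 * prod_encode (4 * (ys ! 1), enc_tm carlitz_T_tm) + 3,
         4 * prod_encode (enc_tm carlitz_T_tm, 4 * (ys ! 1)) + 3), ys ! 0)))"
      by (intro rec_computable_Suc rec_computable_prod_encode rec_computable_add rec_computable_mult
          rec_computable_const rec_computable_nth) simp_all
  qed (simp_all add: rec_computable_nth)
  then show ?thesis using assms by (rule rec_computable_compose2)
qed

definition translate_ddef_code :: "nat \<Rightarrow> nat" where
  "translate_ddef_code n =
    (let k = fst (prod_decode n); m = fst (prod_decode (snd (prod_decode n)));
         eqs = snd (prod_decode (snd (prod_decode n)))
     in prod_encode (k, prod_encode (m, commute_eqs_code (k + m) (translate_eqs_code eqs))))"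

lemma translate_ddef_code_enc_ddef: "translate_ddef_code (enc_ddef d) = enc_ddef (translate_ddef d)"
  by (cases d) (simp add: translate_ddef_code_def enc_ddef_def translate_ddef_def
      translate_eqs_code_enc_eqs commute_eqs_code_enc_eqs)

lemma computable_translate_ddef_code: "computable translate_ddef_code"
proof (rule computable_if_rec_computable)
  show "rec_computable 1 (\<lambda>xs. translate_ddef_code (xs ! 0))"
    unfolding translate_ddef_code_def Let_def
    by (intro rec_computable_prod_encode rec_computable_commute_eqs_code rec_computable_add
        rec_computable_translate_eqs_code rec_computable_fst_prod_decode
        rec_computable_snd_prod_decode rec_computable_nth) simp_all
qed

definition sat_eqs :: "(nat \<Rightarrow> 'a::{plus,times}) \<Rightarrow> 'a list \<Rightarrow> (tm \<times> tm) list \<Rightarrow> bool" where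
  "sat_eqs c v eqs \<longleftrightarrow> (\<forall>(s, t)\<in>set eqs. eval_tm c v s = eval_tm c v t)"

lemma dioph_set_eq_sat_eqs:
  "dioph_set c (k, m, eqs) = {xs. length xs = k \<and> (\<exists>ys. length ys = m \<and> sat_eqs c (xs @ ys) eqs)}"
  by (simp add: dioph_set_def sat_eqs_def)

lemma sat_eqs_append: "sat_eqs c v (eqs @ eqs') \<longleftrightarrow> sat_eqs c v eqs \<and> sat_eqs c v eqs'"
  by (auto simp: sat_eqs_def)

lemma sat_commute_eqs:
  "sat_eqs c v (commute_eqs n) \<longleftrightarrow> (\<forall>j<n. v ! j * (c 2 + c 3) = (c 2 + c 3) * v ! j)"
  unfolding sat_eqs_def set_commute_eqs carlitz_T_tm_def by force

context
  fixes \<phi> :: "'a::{plus,times} \<Rightarrow> 'b::{plus,times}" and c :: "nat \<Rightarrow> 'a" and c' :: "nat \<Rightarrow> 'b"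
  assumes \<phi>_add: "\<And>x y. \<phi> (x + y) = \<phi> x + \<phi> y"
    and \<phi>_mult: "\<And>x y. \<phi> (x * y) = \<phi> x * \<phi> y"
    and \<phi>_consts: "\<And>j. j < 3 \<Longrightarrow> \<phi> (c j) = eval_tm c' [] (translate_tm (Cst j))"
    and \<phi>_inj: "inj \<phi>"
    and range_\<phi>: "range \<phi> = {z. z * (c' 2 + c' 3) = (c' 2 + c' 3) * z}"
begin

lemma eval_translate_tm:
  assumes "csts_tm s \<subseteq> {..<3}" "vars_tm s \<subseteq> {..<length v}"
  shows "eval_tm c' (map \<phi> v) (translate_tm s) = \<phi> (eval_tm c v s)"
  using assms
proof (induction s)
  case (Cst j)
  have "eval_tm c' (map \<phi> v) (translate_tm (Cst j)) = eval_tm c' [] (translate_tm (Cst j))"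
    by (simp add: carlitz_T_tm_def)
  with Cst show ?case by (simp add: \<phi>_consts del: translate_tm.simps)
qed (simp_all add: \<phi>_add \<phi>_mult)

lemma sat_translate_eqs:
  assumes "\<forall>(s, t)\<in>set eqs. vars_tm s \<union> vars_tm t \<subseteq> {..<length v} \<and> csts_tm s \<union> csts_tm t \<subseteq> {..<3}"
  shows "sat_eqs c' (map \<phi> v) (map (map_prod translate_tm translate_tm) eqs) \<longleftrightarrow> sat_eqs c v eqs"
  unfolding sat_eqs_def
proof (simp add: case_prod_beta, rule ball_cong)
  fix e assume "e \<in> set eqs"
  then show "eval_tm c' (map \<phi> v) (translate_tm (fst e)) = eval_tm c' (map \<phi> v) (translate_tm (snd e))
      \<longleftrightarrow> eval_tm c v (fst e) = eval_tm c v (snd e)"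
    using assms by (auto simp: eval_translate_tm inj_eq[OF \<phi>_inj])
qed simp

lemma sat_commute_eqs_iff_in_range:
  "sat_eqs c' w (commute_eqs (length w)) \<longleftrightarrow> (\<exists>v. w = map \<phi> v)"
proof -
  have "sat_eqs c' w (commute_eqs (length w)) \<longleftrightarrow> set w \<subseteq> range \<phi>"
    unfolding sat_commute_eqs range_\<phi> by (auto simp: subset_iff in_set_conv_nth)
  also have "\<dots> \<longleftrightarrow> (\<exists>v. w = map \<phi> v)"
    by (auto simp: ex_map_conv subset_iff)
  finally show ?thesis .
qed

lemma sat_translate_ddef_eqs:
  assumes "wf_ddef 3 (k, m, eqs)" and "length w = k + m"
  shows "sat_eqs c' w (commute_eqs (k + m) @ map (map_prod translate_tm translate_tm) eqs)
      \<longleftrightarrow> (\<exists>v. w = map \<phi> v \<and> sat_eqs c v eqs)"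
proof -
  have "sat_eqs c' (map \<phi> v) (map (map_prod translate_tm translate_tm) eqs) \<longleftrightarrow> sat_eqs c v eqs"
    if "length v = k + m" for v
    using assms(1) that by (intro sat_translate_eqs) (simp add: wf_ddef_def)
  then show ?thesis
    using sat_commute_eqs_iff_in_range[of w] assms(2) by (auto simp: sat_eqs_append)
qed

lemma dioph_set_translate_ddef:
  assumes "wf_ddef 3 d"
  shows "dioph_set c' (translate_ddef d) = map \<phi> ` dioph_set c d"
proof -
  obtain k m eqs where d: "d = (k, m, eqs)" by (cases d)
  note sat_iff = sat_translate_ddef_eqs[OF assms[unfolded d]]
  show ?thesis
  proof (intro set_eqI iffI)
    fix xs' assume "xs' \<in> dioph_set c' (translate_ddef d)"
    then obtain ys' v where "length xs' = k" "length ys' = m" "xs' @ ys' = map \<phi> v" "sat_eqs c v eqs"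
      using sat_iff by (auto simp: d translate_ddef_def dioph_set_eq_sat_eqs)
    moreover obtain vx vy where "v = vx @ vy" "xs' = map \<phi> vx" "ys' = map \<phi> vy"
      using \<open>xs' @ ys' = map \<phi> v\<close> by (metis map_eq_append_conv)
    ultimately show "xs' \<in> map \<phi> ` dioph_set c d"
      unfolding d dioph_set_eq_sat_eqs by auto
  next
    fix xs' assume "xs' \<in> map \<phi> ` dioph_set c d"
    then obtain xs ys where "xs' = map \<phi> xs" "length xs = k" "length ys = m" "sat_eqs c (xs @ ys) eqs"
      unfolding d dioph_set_eq_sat_eqs by auto
    then show "xs' \<in> dioph_set c' (translate_ddef d)"
      using sat_iff
      by (auto simp: d translate_ddef_def dioph_set_eq_sat_eqs
          intro!: exI[of _ "map \<phi> ys"] exI[of _ "xs @ ys"])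
  qed
qed

theorem dioph_map_and_effective_if_range_centralizer:
  "dioph_map c 3 c' 4 \<phi> \<and> effective_dioph_map c 3 c' 4 \<phi>"
proof
  have fst_translate: "fst (translate_ddef d) = fst d" for d
    by (simp add: translate_ddef_def split: prod.split)
  show "effective_dioph_map c 3 c' 4 \<phi>"
    unfolding effective_dioph_map_def
  proof (intro exI[of _ translate_ddef_code] conjI allI impI computable_translate_ddef_code)
    fix d :: ddef assume "wf_ddef 3 d"
    then show "\<exists>d'. translate_ddef_code (enc_ddef d) = enc_ddef d' \<and> wf_ddef 4 d' \<and> fst d' = fst d \<and>
        dioph_set c' d' = map \<phi> ` dioph_set c d"
      by (intro exI[of _ "translate_ddef d"])
        (simp add: translate_ddef_code_enc_ddef wf_translate_ddef dioph_set_translate_ddef fst_translate)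
  qed
  show "dioph_map c 3 c' 4 \<phi>"
    unfolding dioph_map_def is_dioph_def
  proof (intro allI impI, elim conjE exE)
    fix k S m eqs
    assume S: "S \<subseteq> {xs. length xs = k}" and wf: "wf_ddef 3 (k, m, eqs)"
      and S_eq: "S = dioph_set c (k, m, eqs)"
    let ?eqs' = "commute_eqs (k + m) @ map (map_prod translate_tm translate_tm) eqs"
    have "wf_ddef 4 (k, m, ?eqs')"
      using wf_translate_ddef[OF wf] by (simp add: translate_ddef_def)
    moreover have "map \<phi> ` S = dioph_set c' (k, m, ?eqs')"
      using dioph_set_translate_ddef[OF wf] S_eq by (simp add: translate_ddef_def)
    moreover have "map \<phi> ` S \<subseteq> {xs. length xs = k}" using S by auto
    ultimately show "map \<phi> ` S \<subseteq> {xs. length xs = k} \<and>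
        (\<exists>m eqs. wf_ddef 4 (k, m, eqs) \<and> map \<phi> ` S = dioph_set c' (k, m, eqs))"
      by blast
  qed
qed

end

definition left_eval :: "('a::zero \<Rightarrow> 'b::semiring_1) \<Rightarrow> 'b \<Rightarrow> 'a poly \<Rightarrow> 'b" where
  "left_eval \<kappa> X p = (\<Sum>i\<le>degree p. \<kappa> (coeff p i) * X ^ i)"

locale left_eval_additive = additive \<kappa> for \<kappa> :: "'a::comm_ring_1 \<Rightarrow> 'b::ring_1" +
  fixes X :: 'b
begin

declare zero [simp]

lemma eval_eq_sum: "degree p < n \<Longrightarrow> left_eval \<kappa> X p = (\<Sum>i<n. \<kappa> (coeff p i) * X ^ i)"
  unfolding left_eval_def
  by (rule sum.mono_neutral_left) (auto simp: coeff_eq_0)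

lemma eval_0 [simp]: "left_eval \<kappa> X 0 = 0"
  by (simp add: left_eval_def)

lemma eval_add: "left_eval \<kappa> X (p + r) = left_eval \<kappa> X p + left_eval \<kappa> X r"
proof -
  let ?n = "Suc (max (degree p) (degree r))"
  have "degree (p + r) < ?n" using degree_add_le_max[of p r] by simp
  then show ?thesis
    by (simp add: eval_eq_sum[of _ ?n] add distrib_right sum.distrib)
qed

lemma eval_diff: "left_eval \<kappa> X (p - r) = left_eval \<kappa> X p - left_eval \<kappa> X r"
proof -
  have "left_eval \<kappa> X (p - r) + left_eval \<kappa> X r = left_eval \<kappa> X p"
    by (simp flip: eval_add)
  then show ?thesis by (simp add: eq_diff_eq)
qed

lemma eval_sum: "left_eval \<kappa> X (sum f A) = (\<Sum>x\<in>A. left_eval \<kappa> X (f x))"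
  by (induction A rule: infinite_finite_induct) (simp_all add: eval_add)

lemma eval_pCons: "left_eval \<kappa> X (pCons c p) = \<kappa> c + left_eval \<kappa> X p * X"
proof -
  let ?n = "Suc (degree p)"
  have "left_eval \<kappa> X (pCons c p) = (\<Sum>i<Suc ?n. \<kappa> (coeff (pCons c p) i) * X ^ i)"
    by (rule eval_eq_sum) (simp add: degree_pCons_le le_imp_less_Suc)
  also have "\<dots> = \<kappa> c + (\<Sum>i<?n. \<kappa> (coeff p i) * (X ^ i * X))"
    by (simp only: sum.lessThan_Suc_shift power_Suc2) simp
  also have "\<dots> = \<kappa> c + (\<Sum>i<?n. \<kappa> (coeff p i) * X ^ i) * X"
    by (simp add: sum_distrib_right mult.assoc del: sum.lessThan_Suc)
  finally show ?thesis by (simp add: eval_eq_sum[of p ?n])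
qed

lemma eval_const: "left_eval \<kappa> X [:c:] = \<kappa> c"
  using eval_pCons[of c 0] by simp

lemma eval_monom: "left_eval \<kappa> X (monom c n) = \<kappa> c * X ^ n"
  by (induction n)
    (simp_all add: monom_0 monom_Suc eval_pCons eval_const mult.assoc power_commutes)

end

locale left_eval_commuting = left_eval_additive \<kappa> X for \<kappa> :: "'a::comm_ring_1 \<Rightarrow> 'b::ring_1" and X +
  assumes coeff_mult: "\<kappa> (a * b) = \<kappa> a * \<kappa> b"
    and coeff_commute: "\<kappa> a * X = X * \<kappa> a"
begin

lemma eval_commute_X: "left_eval \<kappa> X p * X = X * left_eval \<kappa> X p"
  by (induction p) (simp_all add: eval_pCons distrib_left distrib_right coeff_commute mult.assoc)

lemma eval_smult: "left_eval \<kappa> X (smult c p) = \<kappa> c * left_eval \<kappa> X p"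
  by (induction p) (simp_all add: eval_pCons distrib_left coeff_mult mult.assoc)

lemma eval_mult: "left_eval \<kappa> X (p * r) = left_eval \<kappa> X p * left_eval \<kappa> X r"
proof (induction p)
  case (pCons c p)
  have "left_eval \<kappa> X (pCons c p * r) = \<kappa> c * left_eval \<kappa> X r + left_eval \<kappa> X (p * r) * X"
    by (simp add: eval_add eval_smult eval_pCons)
  moreover have "left_eval \<kappa> X (p * r) * X = left_eval \<kappa> X p * X * left_eval \<kappa> X r"
    by (simp only: pCons.IH eval_commute_X[of r] mult.assoc)
  ultimately show ?case by (simp add: eval_pCons distrib_right)
qed simp

lemma eval_mult_commute: "left_eval \<kappa> X p * left_eval \<kappa> X r = left_eval \<kappa> X r * left_eval \<kappa> X p"
  by (simp flip: eval_mult add: mult.commute)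

end

section \<open>Twisted polynomials\<close>

locale twisted_fraction_ring =
  fixes q :: nat and e :: "'k::field \<Rightarrow> 'd::division_ring" and t :: 'd
  assumes twisted: "is_left_twisted_fraction_ring q e t"
begin

lemma e_inj: "inj e"
  and e_1 [simp]: "e 1 = 1"
  and e_add: "e (a + b) = e a + e b"
  and e_mult: "e (a * b) = e a * e b"
  and t_mult_e: "t * e a = e (a ^ q) * t"
  and coeffs_eq_0: "(\<Sum>i<n. e (c i) * t ^ i) = 0 \<Longrightarrow> i < n \<Longrightarrow> c i = 0"
  and left_fraction: "\<exists>a b. a \<in> twisted_polys e t \<and> b \<in> twisted_polys e t \<and> b \<noteq> 0 \<and> x = inverse b * a"
  using twisted unfolding is_left_twisted_fraction_ring_def by blast+

sublocale tw: left_eval_additive e t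
  by unfold_locales (rule e_add)

abbreviation tw_poly :: "'k poly \<Rightarrow> 'd" where
  "tw_poly \<equiv> left_eval e t"

lemma e_eq_0_iff [simp]: "e a = 0 \<longleftrightarrow> a = 0"
  using e_inj tw.zero by (metis injD)

lemma q_pos: "0 < q"
proof (rule ccontr)
  assume "\<not> 0 < q"
  then have "t = 0" using t_mult_e[of 0] by simp
  then have "(\<Sum>i<2. e (if i = 1 then 1 else 0) * t ^ i) = 0"
    by (simp add: numeral_2_eq_2)
  then show False
    using coeffs_eq_0[where c = "\<lambda>i. if i = 1 then 1 else 0" and n = 2 and i = 1] by simp
qed

lemma t_power_mult_e: "t ^ i * e a = e (a ^ (q ^ i)) * t ^ i"
proof (induction i arbitrary: a)
  case (Suc i)
  have "t ^ Suc i * e a = t ^ i * e (a ^ q) * t"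
    by (simp only: power_Suc2 mult.assoc t_mult_e)
  also have "\<dots> = e (a ^ (q ^ Suc i)) * t ^ Suc i"
    by (simp add: Suc mult.assoc power_mult[symmetric] mult.commute power_Suc2 power_commutes)
  finally show ?case .
qed simp

lemma tw_poly_eq_0_iff [simp]: "tw_poly p = 0 \<longleftrightarrow> p = 0"
proof
  assume "tw_poly p = 0"
  then have "(\<Sum>i<Suc (degree p). e (coeff p i) * t ^ i) = 0"
    by (simp add: tw.eval_eq_sum[of p "Suc (degree p)"] del: sum.lessThan_Suc)
  then have "lead_coeff p = 0" using coeffs_eq_0 by blast
  then show "p = 0" by simp
qed simp

lemma tw_poly_inject: "tw_poly p = tw_poly r \<longleftrightarrow> p = r"
  using tw_poly_eq_0_iff[of "p - r"] by (simp add: tw.eval_diff)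

lemma twisted_polys_eq_range: "twisted_polys e t = range tw_poly"
proof (intro set_eqI iffI)
  fix x assume "x \<in> twisted_polys e t"
  then obtain c n where "x = (\<Sum>i<n. e (c i) * t ^ i)" unfolding twisted_polys_def by blast
  then have "x = tw_poly (\<Sum>i<n. monom (c i) i)" by (simp add: tw.eval_sum tw.eval_monom)
  then show "x \<in> range tw_poly" by simp
next
  fix x assume "x \<in> range tw_poly"
  then obtain p where "x = tw_poly p" by blast
  then have "x = (\<Sum>i<Suc (degree p). e (coeff p i) * t ^ i)"
    by (simp add: tw.eval_eq_sum[of p "Suc (degree p)"] del: sum.lessThan_Suc)
  then show "x \<in> twisted_polys e t" unfolding twisted_polys_def by blast
qed

definition frob_coeffs :: "nat \<Rightarrow> 'k poly \<Rightarrow> 'k poly" where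
  "frob_coeffs i r = map_poly (\<lambda>c. c ^ (q ^ i)) r"

lemma coeff_frob_coeffs: "coeff (frob_coeffs i r) n = coeff r n ^ (q ^ i)"
  unfolding frob_coeffs_def by (rule coeff_map_poly) (simp add: q_pos)

lemma degree_frob_coeffs: "degree (frob_coeffs i r) = degree r"
  unfolding frob_coeffs_def by (rule degree_map_poly) simp

lemma lead_coeff_frob_coeffs: "lead_coeff (frob_coeffs i r) = lead_coeff r ^ (q ^ i)"
  by (simp add: degree_frob_coeffs coeff_frob_coeffs)

lemma frob_coeffs_eq_0_iff [simp]: "frob_coeffs i r = 0 \<longleftrightarrow> r = 0"
  by (metis coeff_frob_coeffs degree_frob_coeffs leading_coeff_0_iff power_eq_0_iff
      zero_less_power q_pos)

lemma t_power_mult_tw_poly: "t ^ i * tw_poly r = tw_poly (frob_coeffs i r) * t ^ i"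
proof -
  let ?n = "Suc (degree r)"
  have "t ^ i * tw_poly r = (\<Sum>j<?n. t ^ i * e (coeff r j) * t ^ j)"
    by (simp add: tw.eval_eq_sum[of r ?n] sum_distrib_left mult.assoc del: sum.lessThan_Suc)
  also have "\<dots> = (\<Sum>j<?n. e (coeff (frob_coeffs i r) j) * t ^ j * t ^ i)"
    by (rule sum.cong)
      (simp_all add: t_power_mult_e coeff_frob_coeffs mult.assoc add.commute flip: power_add)
  also have "\<dots> = tw_poly (frob_coeffs i r) * t ^ i"
    by (simp add: tw.eval_eq_sum[of _ ?n] degree_frob_coeffs sum_distrib_right del: sum.lessThan_Suc)
  finally show ?thesis .
qed

lemma tw_poly_smult: "tw_poly (smult c p) = e c * tw_poly p"
  by (induction p) (simp_all add: tw.eval_pCons e_add e_mult distrib_left mult.assoc)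

lemma tw_poly_monom_mult: "tw_poly (monom c i * s) = e c * tw_poly s * t ^ i"
  by (induction i)
    (simp_all add: monom_0 monom_Suc tw_poly_smult tw.eval_pCons mult.assoc power_commutes)

definition tw_mult :: "'k poly \<Rightarrow> 'k poly \<Rightarrow> 'k poly" where
  "tw_mult p r = (\<Sum>i\<le>degree p. monom (coeff p i) i * frob_coeffs i r)"

lemma tw_poly_tw_mult: "tw_poly (tw_mult p r) = tw_poly p * tw_poly r"
proof -
  have "tw_poly (tw_mult p r) = (\<Sum>i\<le>degree p. e (coeff p i) * tw_poly (frob_coeffs i r) * t ^ i)"
    by (simp add: tw_mult_def tw.eval_sum tw_poly_monom_mult)
  also have "\<dots> = (\<Sum>i\<le>degree p. e (coeff p i) * t ^ i * tw_poly r)"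
    by (simp add: t_power_mult_tw_poly mult.assoc)
  also have "\<dots> = tw_poly p * tw_poly r"
    by (simp add: left_eval_def sum_distrib_right)
  finally show ?thesis .
qed

lemma degree_lead_coeff_tw_mult:
  assumes "p \<noteq> 0" "r \<noteq> 0"
  shows "degree (tw_mult p r) = degree p + degree r
    \<and> lead_coeff (tw_mult p r) = lead_coeff p * lead_coeff r ^ (q ^ degree p)"
proof -
  let ?f = "\<lambda>i. monom (coeff p i) i * frob_coeffs i r"
  have top: "degree (?f (degree p)) = degree p + degree r"
      "lead_coeff (?f (degree p)) = lead_coeff p * lead_coeff r ^ (q ^ degree p)"
    using assms by (simp add: degree_mult_eq degree_monom_eq degree_frob_coeffs)
      (simp only: lead_coeff_mult lead_coeff_monom lead_coeff_frob_coeffs)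
  have low: "degree (\<Sum>i<degree p. ?f i) < degree (?f (degree p))" if "degree p > 0"
  proof (rule degree_sum_less)
    fix i assume "i \<in> {..<degree p}"
    have "degree (?f i) \<le> i + degree r"
      using degree_mult_le[of "monom (coeff p i) i" "frob_coeffs i r"] degree_monom_le[of "coeff p i" i]
      by (simp add: degree_frob_coeffs)
    then show "degree (?f i) < degree (?f (degree p))"
      using \<open>i \<in> {..<degree p}\<close> top by simp
  qed (use that top in simp)
  have split: "tw_mult p r = (\<Sum>i<degree p. ?f i) + ?f (degree p)"
    by (simp add: tw_mult_def lessThan_Suc_atMost[symmetric])
  show ?thesis
  proof (cases "degree p = 0")
    case True
    then show ?thesis using split top by simp
  next
    case False
    then have less: "degree (\<Sum>i<degree p. ?f i) < degree (?f (degree p))" by (simp add: low)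
    have "degree (tw_mult p r) = degree (?f (degree p))"
      unfolding split by (rule degree_add_eq_right[OF less])
    moreover have "lead_coeff (tw_mult p r) = lead_coeff (?f (degree p))"
      unfolding split by (rule lead_coeff_add_le[OF less])
    ultimately show ?thesis using top by simp
  qed
qed

abbreviation Ktau :: "'d set" where
  "Ktau \<equiv> twisted_polys e t"

(* Meaningful only on Ktau, where inv tw_poly inverts tw_poly. *)
definition tw_deg :: "'d \<Rightarrow> nat" where
  "tw_deg x = degree (inv tw_poly x)"

definition tw_lead :: "'d \<Rightarrow> 'k" where
  "tw_lead x = lead_coeff (inv tw_poly x)"

lemma inj_tw_poly: "inj tw_poly"
  by (rule injI) (simp add: tw_poly_inject)

lemma tw_deg_tw_poly [simp]: "tw_deg (tw_poly p) = degree p"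
  and tw_lead_tw_poly [simp]: "tw_lead (tw_poly p) = lead_coeff p"
  by (simp_all add: tw_deg_def tw_lead_def inv_f_f[OF inj_tw_poly])

lemma tw_lead_0 [simp]: "tw_lead 0 = 0"
  using tw_lead_tw_poly[of 0] by simp

lemma tw_poly_in_Ktau [simp]: "tw_poly p \<in> Ktau"
  by (simp add: twisted_polys_eq_range)

lemma Ktau_cases [cases set: twisted_polys]:
  assumes "x \<in> Ktau"
  obtains p where "x = tw_poly p"
  using assms by (auto simp: twisted_polys_eq_range)

lemma zero_in_Ktau [simp]: "0 \<in> Ktau"
  using tw_poly_in_Ktau[of 0] by simp

lemma Ktau_add: "x \<in> Ktau \<Longrightarrow> y \<in> Ktau \<Longrightarrow> x + y \<in> Ktau"
  by (metis Ktau_cases tw_poly_in_Ktau tw.eval_add)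

lemma Ktau_diff: "x \<in> Ktau \<Longrightarrow> y \<in> Ktau \<Longrightarrow> x - y \<in> Ktau"
  by (metis Ktau_cases tw_poly_in_Ktau tw.eval_diff)

lemma Ktau_mult: "x \<in> Ktau \<Longrightarrow> y \<in> Ktau \<Longrightarrow> x * y \<in> Ktau"
  by (metis Ktau_cases tw_poly_in_Ktau tw_poly_tw_mult)

lemma e_in_Ktau: "e c \<in> Ktau"
  and tw_deg_e: "tw_deg (e c) = 0"
  and tw_lead_e: "tw_lead (e c) = c"
  using tw_poly_in_Ktau[of "[:c:]"] tw_deg_tw_poly[of "[:c:]"] tw_lead_tw_poly[of "[:c:]"]
  by (simp_all add: tw.eval_const)

lemma tw_lead_eq_0_iff: "x \<in> Ktau \<Longrightarrow> tw_lead x = 0 \<longleftrightarrow> x = 0"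
  by (metis Ktau_cases tw_lead_tw_poly leading_coeff_0_iff tw_poly_eq_0_iff)

lemma tw_deg_tw_lead_mult:
  assumes "x \<in> Ktau" "y \<in> Ktau" "x \<noteq> 0" "y \<noteq> 0"
  shows "tw_deg (x * y) = tw_deg x + tw_deg y \<and> tw_lead (x * y) = tw_lead x * tw_lead y ^ (q ^ tw_deg x)"
proof -
  obtain p r where p: "x = tw_poly p" "p \<noteq> 0" and r: "y = tw_poly r" "r \<noteq> 0"
    using assms by (metis Ktau_cases tw_poly_eq_0_iff)
  show ?thesis
    unfolding p(1) r(1) tw_poly_tw_mult[symmetric] tw_deg_tw_poly tw_lead_tw_poly
    by (rule degree_lead_coeff_tw_mult[OF p(2) r(2)])
qed

lemma tw_deg_diff_less:
  assumes "x \<in> Ktau" "y \<in> Ktau" "tw_deg x = tw_deg y" "tw_lead x = tw_lead y" "x \<noteq> y"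
  shows "tw_deg (x - y) < tw_deg x"
proof -
  obtain p r where p: "x = tw_poly p" and r: "y = tw_poly r"
    using assms(1,2) by (metis Ktau_cases)
  have "p - r \<noteq> 0" using assms(5) p r by auto
  moreover have "coeff (p - r) (degree p) = 0" using assms(3,4) p r by simp
  moreover have "degree (p - r) \<le> degree p"
    using degree_diff_le_max[of p r] assms(3) p r by simp
  ultimately have "degree (p - r) < degree p"
    by (metis leading_coeff_0_iff le_neq_implies_less)
  then show ?thesis using p r by (simp flip: tw.eval_diff)
qed

lemma tw_deg_tw_lead_add_lower:
  assumes "x \<in> Ktau" "y \<in> Ktau" "tw_deg y < tw_deg x"
  shows "tw_deg (x + y) = tw_deg x \<and> tw_lead (x + y) = tw_lead x"
proof -
  obtain p r where p: "x = tw_poly p" and r: "y = tw_poly r"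
    using assms(1,2) by (metis Ktau_cases)
  have "degree r < degree p" using assms(3) p r by simp
  then show ?thesis
    using p r by (simp add: degree_add_eq_left lead_coeff_add_le add.commute coeff_eq_0
        flip: tw.eval_add)
qed

lemma Ktau_right_division:
  assumes "g \<in> Ktau" "g \<noteq> 0" "f \<in> Ktau"
  shows "\<exists>h r. h \<in> Ktau \<and> r \<in> Ktau \<and> f = h * g + r \<and> (r = 0 \<or> tw_deg r < tw_deg g)"
  using assms(3)
proof (induction "tw_deg f" arbitrary: f rule: less_induct)
  case less
  show ?case
  proof (cases "f = 0 \<or> tw_deg f < tw_deg g")
    case True
    then show ?thesis using less.prems by (intro exI[of _ 0] exI[of _ f]) auto
  next
    case False
    then have "f \<noteq> 0" and deg_le: "tw_deg g \<le> tw_deg f" by auto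
    define k where "k = tw_deg f - tw_deg g"
    define c where "c = tw_lead f / tw_lead g ^ (q ^ k)"
    have "tw_lead g \<noteq> 0" "tw_lead f \<noteq> 0"
      using assms less.prems \<open>f \<noteq> 0\<close> by (simp_all add: tw_lead_eq_0_iff)
    then have "c \<noteq> 0" by (simp add: c_def)
    let ?m = "tw_poly (monom c k)"
    have m: "?m \<in> Ktau" "?m \<noteq> 0" "tw_deg ?m = k" "tw_lead ?m = c"
      using \<open>c \<noteq> 0\<close> by (simp_all add: degree_monom_eq)
    have mg: "?m * g \<in> Ktau" "tw_deg (?m * g) = tw_deg f" "tw_lead (?m * g) = tw_lead f"
      using Ktau_mult[OF m(1) assms(1)] tw_deg_tw_lead_mult[OF m(1) assms(1) m(2) assms(2)]
        m deg_le \<open>tw_lead g \<noteq> 0\<close>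
      by (simp_all add: k_def c_def)
    show ?thesis
    proof (cases "f = ?m * g")
      case True
      then show ?thesis using m(1) by (intro exI[of _ ?m] exI[of _ 0]) simp
    next
      case False
      have "tw_deg (f - ?m * g) < tw_deg f"
        using tw_deg_diff_less[OF less.prems mg(1)] mg False by simp
      then obtain h r where "h \<in> Ktau" "r \<in> Ktau" "f - ?m * g = h * g + r"
          "r = 0 \<or> tw_deg r < tw_deg g"
        using less.hyps Ktau_diff[OF less.prems mg(1)] by blast
      moreover have "f = (?m + h) * g + r" using \<open>f - ?m * g = h * g + r\<close>
        by (simp add: algebra_simps)
      ultimately show ?thesis using m(1) by (blast intro: Ktau_add)
    qed
  qed
qed

end

section \<open>The Carlitz module and its centralizer\<close>

lemma power_card_UNIV_eq_self:
  fixes c :: "'q::{finite,field}"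
  shows "c ^ CARD('q) = c"
proof (cases "c = 0")
  case False
  have "c * (\<Prod>y\<in>UNIV - {0}. c * y) = c * c ^ (CARD('q) - 1) * \<Prod>(UNIV - {0})"
    by (simp add: prod.distrib mult_ac)
  also have "c * c ^ (CARD('q) - 1) = c ^ CARD('q)"
    using finite_UNIV_card_ge_0[where ?'a = 'q] by (simp flip: power_Suc)
  also have "(\<Prod>y\<in>UNIV - {0}. c * y) = \<Prod>(UNIV - {0})"
    by (rule prod.reindex_bij_witness[of _ "\<lambda>y. y / c" "\<lambda>y. c * y"]) (use False in auto)
  finally show ?thesis by simp
qed (simp add: finite_UNIV_card_ge_0)

lemma power_power_eq_self: "c ^ m = c \<Longrightarrow> c ^ (m ^ n) = (c :: 'a::monoid_mult)"
  by (induction n) (simp_all add: power_mult mult.commute[of m])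

lemma mult_inverse_mult_cancel_left:
  fixes u x :: "'a::division_ring"
  shows "u \<noteq> 0 \<Longrightarrow> u * (inverse u * x) = x"
  by (simp flip: mult.assoc)

lemma commuting_mult_left_fraction:
  fixes a b d :: "'a::division_ring"
  assumes "b \<noteq> 0" "b * d = d * b"
  shows "b * d * (inverse b * a) = d * a"
proof -
  have "b * d * (inverse b * a) = d * (b * (inverse b * a))"
    by (simp only: assms(2) mult.assoc)
  then show ?thesis using assms(1) by (simp add: mult_inverse_mult_cancel_left)
qed

lemma mult_left_fraction_cancel:
  fixes b c d :: "'a::division_ring"
  shows "d \<noteq> 0 \<Longrightarrow> b * d * (inverse d * c) = b * c"
  by (simp add: mult.assoc mult_inverse_mult_cancel_left)

lemma left_fraction_eq_iff:
  fixes a b c d :: "'a::division_ring"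
  assumes "b \<noteq> 0" "d \<noteq> 0" "b * d = d * b" "a * d = d * a" "c * b = b * c"
  shows "inverse b * a = inverse d * c \<longleftrightarrow> a * d = c * b"
proof -
  have "inverse b * a = inverse d * c \<longleftrightarrow> b * d * (inverse b * a) = b * d * (inverse d * c)"
    using assms(1,2) by simp
  also have "\<dots> \<longleftrightarrow> d * a = b * c"
    by (simp only: commuting_mult_left_fraction[OF assms(1,3)] mult_left_fraction_cancel[OF assms(2)])
  finally show ?thesis using assms(4,5) by simp
qed

lemma left_fraction_add:
  fixes a b c d :: "'a::division_ring"
  assumes "b \<noteq> 0" "d \<noteq> 0" "b * d = d * b" "a * d = d * a" "c * b = b * c"
  shows "inverse (b * d) * (a * d + c * b) = inverse b * a + inverse d * c"
proof -
  have "b * d * (inverse b * a + inverse d * c) = d * a + b * c"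
    by (simp only: distrib_left commuting_mult_left_fraction[OF assms(1,3)]
        mult_left_fraction_cancel[OF assms(2)])
  also have "\<dots> = b * d * (inverse (b * d) * (a * d + c * b))"
    using assms by (simp add: mult_inverse_mult_cancel_left)
  finally show ?thesis using assms(1,2) by simp
qed

lemma left_fraction_mult:
  fixes a b c d :: "'a::division_ring"
  assumes "b \<noteq> 0" "d \<noteq> 0" "b * d = d * b" "a * d = d * a"
  shows "inverse (b * d) * (a * c) = inverse b * a * (inverse d * c)"
proof -
  have "b * d * (inverse b * a * (inverse d * c)) = d * a * (inverse d * c)"
    using commuting_mult_left_fraction[OF assms(1,3), of "a * (inverse d * c)"]
    by (simp add: mult.assoc)
  also have "\<dots> = a * d * (inverse d * c)" by (simp only: assms(4))
  also have "\<dots> = a * c" by (rule mult_left_fraction_cancel[OF assms(2)])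
  also have "\<dots> = b * d * (inverse (b * d) * (a * c))"
    using assms by (simp add: mult_inverse_mult_cancel_left)
  finally show ?thesis using assms(1,2) by simp
qed

locale carlitz_setting = twisted_fraction_ring "CARD('q)" e t
  for \<iota> :: "'q::{finite,field} poly \<Rightarrow> 'k::field" and e :: "'k \<Rightarrow> 'd::division_ring" and t :: 'd +
  assumes \<iota>_1: "\<iota> 1 = 1"
    and \<iota>_add: "\<iota> (a + b) = \<iota> a + \<iota> b"
    and \<iota>_mult: "\<iota> (a * b) = \<iota> a * \<iota> b"
begin

sublocale \<iota>: additive \<iota>
  by unfold_locales (rule \<iota>_add)

definition \<kappa> :: "'q \<Rightarrow> 'd" where
  "\<kappa> c = e (\<iota> [:c:])"

definition \<Phi> :: 'd where
  "\<Phi> = e (\<iota> [:0, 1:]) + t"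

lemma \<iota>_const_inj: "\<iota> [:a:] = \<iota> [:b:] \<Longrightarrow> a = b"
proof (rule ccontr)
  assume "\<iota> [:a:] = \<iota> [:b:]" "a \<noteq> b"
  then have "\<iota> ([:a:] - [:b:]) = 0" by (simp only: \<iota>.diff) simp
  then have "\<iota> [:a - b:] = 0" by simp
  then have "\<iota> ([:a - b:] * [:inverse (a - b):]) = 0" by (simp only: \<iota>_mult mult_zero_left)
  then show False using \<open>a \<noteq> b\<close> \<iota>_1 by (simp add: one_pCons)
qed

lemma \<iota>_const_power_card: "\<iota> [:c:] ^ CARD('q) = \<iota> [:c:]"
proof -
  have "\<iota> (p ^ n) = \<iota> p ^ n" for p n by (induction n) (simp_all add: \<iota>_1 \<iota>_mult)
  moreover have "[:c:] ^ n = [:c ^ n:]" for n by (induction n) (simp_all add: one_pCons)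
  ultimately show ?thesis by (metis power_card_UNIV_eq_self)
qed

lemma card_ge_2: "2 \<le> CARD('q)"
proof -
  have "card {0 :: 'q, 1} \<le> CARD('q)" by (rule card_mono) simp_all
  then show ?thesis by simp
qed

lemma power_card_fixed_imp_\<iota>_const:
  assumes "x ^ CARD('q) = x"
  shows "\<exists>c. x = \<iota> [:c:]"
proof -
  define f :: "'k poly" where "f = monom 1 CARD('q) - [:0, 1:]"
  have poly_f: "poly f y = y ^ CARD('q) - y" for y by (simp add: f_def poly_monom)
  have "coeff f CARD('q) = 1" using card_ge_2 by (simp add: f_def coeff_eq_0)
  then have "f \<noteq> 0" by auto
  have "degree f \<le> CARD('q)"
    unfolding f_def using card_ge_2 by (intro degree_diff_le) (simp_all add: degree_monom_le)
  let ?roots = "{y. poly f y = 0}" and ?image = "range (\<lambda>c. \<iota> [:c:])"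
  have "?image \<subseteq> ?roots" by (auto simp: poly_f \<iota>_const_power_card)
  moreover have "finite ?roots" using \<open>f \<noteq> 0\<close> by (rule poly_roots_finite)
  moreover have "card ?roots \<le> card ?image"
  proof -
    have "inj (\<lambda>c. \<iota> [:c:])" by (rule injI) (rule \<iota>_const_inj)
    then have "card ?image = CARD('q)" by (simp add: card_image)
    then show ?thesis
      using card_poly_roots_bound[OF \<open>f \<noteq> 0\<close>] \<open>degree f \<le> CARD('q)\<close> by linarith
  qed
  ultimately have "?image = ?roots" by (metis card_seteq)
  moreover have "x \<in> ?roots" using assms by (simp add: poly_f)
  ultimately show ?thesis by auto
qed

lemma \<kappa>_add: "\<kappa> (a + b) = \<kappa> a + \<kappa> b"
proof -
  have "[:a + b:] = [:a:] + [:b:]" by simp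
  then show ?thesis by (simp only: \<kappa>_def \<iota>_add e_add)
qed

lemma \<kappa>_mult: "\<kappa> (a * b) = \<kappa> a * \<kappa> b"
proof -
  have "[:a * b:] = [:a:] * [:b:]" by simp
  then show ?thesis by (simp only: \<kappa>_def \<iota>_mult e_mult)
qed

lemma \<kappa>_commute_\<Phi>: "\<kappa> c * \<Phi> = \<Phi> * \<kappa> c"
proof -
  have "\<kappa> c * e a = e a * \<kappa> c" for a by (simp add: \<kappa>_def mult.commute flip: e_mult)
  moreover have "t * \<kappa> c = \<kappa> c * t" by (simp add: \<kappa>_def t_mult_e \<iota>_const_power_card)
  ultimately show ?thesis by (simp add: \<Phi>_def distrib_left distrib_right)
qed

sublocale cz: left_eval_commuting \<kappa> \<Phi>
  by unfold_locales (simp_all add: \<kappa>_add \<kappa>_mult \<kappa>_commute_\<Phi>)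

lemma carlitz_eq_left_eval: "carlitz \<iota> e t = left_eval \<kappa> \<Phi>"
  by (simp add: fun_eq_iff carlitz_def left_eval_def \<kappa>_def \<Phi>_def)

abbreviation \<phi> :: "'q poly \<Rightarrow> 'd" where
  "\<phi> \<equiv> left_eval \<kappa> \<Phi>"

lemma \<Phi>_in_Ktau: "\<Phi> \<in> Ktau"
  and tw_deg_\<Phi>: "tw_deg \<Phi> = 1"
  and tw_lead_\<Phi>: "tw_lead \<Phi> = 1"
  and \<Phi>_nonzero: "\<Phi> \<noteq> 0"
proof -
  have "\<Phi> = tw_poly [:\<iota> [:0, 1:], 1:]"
    by (simp add: \<Phi>_def tw.eval_pCons tw.eval_const)
  then show "\<Phi> \<in> Ktau" "tw_deg \<Phi> = 1" "tw_lead \<Phi> = 1" "\<Phi> \<noteq> 0" by simp_all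
qed

lemma \<kappa>_in_Ktau: "\<kappa> c \<in> Ktau"
  and tw_deg_\<kappa>: "tw_deg (\<kappa> c) = 0"
  and tw_lead_\<kappa>: "tw_lead (\<kappa> c) = \<iota> [:c:]"
  by (simp_all add: \<kappa>_def e_in_Ktau tw_deg_e tw_lead_e)

lemma \<iota>_const_eq_0_iff: "\<iota> [:c:] = 0 \<longleftrightarrow> c = 0"
  using \<iota>_const_inj[of c 0] by (auto simp: \<iota>.zero)

lemma carlitz_in_Ktau: "\<phi> a \<in> Ktau"
  by (induction a) (simp_all add: cz.eval_pCons Ktau_add Ktau_mult \<kappa>_in_Ktau \<Phi>_in_Ktau)

lemma tw_deg_tw_lead_carlitz:
  "a \<noteq> 0 \<Longrightarrow> tw_deg (\<phi> a) = degree a \<and> tw_lead (\<phi> a) = \<iota> [:lead_coeff a:]"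
proof (induction a)
  case (pCons c a)
  show ?case
  proof (cases "a = 0")
    case True
    then show ?thesis by (simp add: cz.eval_const tw_deg_\<kappa> tw_lead_\<kappa>)
  next
    case False
    then have IH: "tw_deg (\<phi> a) = degree a" "tw_lead (\<phi> a) = \<iota> [:lead_coeff a:]"
      using pCons.IH by auto
    then have "\<phi> a \<noteq> 0"
      using False carlitz_in_Ktau by (metis \<iota>_const_eq_0_iff leading_coeff_0_iff tw_lead_eq_0_iff)
    then have "tw_deg (\<phi> a * \<Phi>) = degree a + 1" "tw_lead (\<phi> a * \<Phi>) = \<iota> [:lead_coeff a:]"
      using tw_deg_tw_lead_mult[OF carlitz_in_Ktau \<Phi>_in_Ktau _ \<Phi>_nonzero] IH
      by (simp_all add: tw_deg_\<Phi> tw_lead_\<Phi>)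
    moreover have "tw_deg (\<kappa> c) < tw_deg (\<phi> a * \<Phi>)"
      using calculation by (simp add: tw_deg_\<kappa>)
    ultimately show ?thesis
      using tw_deg_tw_lead_add_lower[OF Ktau_mult[OF carlitz_in_Ktau \<Phi>_in_Ktau] \<kappa>_in_Ktau] False
      by (simp add: cz.eval_pCons add.commute)
  qed
qed simp

lemma carlitz_eq_0_iff [simp]: "\<phi> a = 0 \<longleftrightarrow> a = 0"
proof
  assume "\<phi> a = 0"
  then have "tw_lead (\<phi> a) = 0" by simp
  then show "a = 0" using tw_deg_tw_lead_carlitz[of a] by (auto simp: \<iota>_const_eq_0_iff)
qed simp

lemma carlitz_inject: "\<phi> a = \<phi> b \<longleftrightarrow> a = b"
  using carlitz_eq_0_iff[of "a - b"] by (simp add: cz.eval_diff)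

lemma carlitz_F_Fract: "b \<noteq> 0 \<Longrightarrow> carlitz_F \<iota> e t (Fract a b) = inverse (\<phi> b) * \<phi> a"
proof -
  assume "b \<noteq> 0"
  obtain a' b' where some: "(SOME (a', b'). b' \<noteq> 0 \<and> Fract a b = Fract a' b') = (a', b')"
    by fastforce
  have "(\<lambda>(a', b'). b' \<noteq> 0 \<and> Fract a b = Fract a' b') (a', b')"
    unfolding some[symmetric] by (rule someI_ex) (use \<open>b \<noteq> 0\<close> in auto)
  then have b': "b' \<noteq> 0" and "Fract a b = Fract a' b'" by simp_all
  then have "a * b' = a' * b" using \<open>b \<noteq> 0\<close> by (simp add: eq_fract)
  then have "inverse (\<phi> b') * \<phi> a' = inverse (\<phi> b) * \<phi> a"
    using \<open>b \<noteq> 0\<close> b' by (subst left_fraction_eq_iff) (simp_all add: cz.eval_mult_commute flip: cz.eval_mult)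
  then show ?thesis by (simp add: carlitz_F_def some carlitz_eq_left_eval)
qed

lemma carlitz_1 [simp]: "\<phi> 1 = 1"
  using cz.eval_const[of 1] by (simp add: \<kappa>_def \<iota>_1 flip: one_pCons)

lemma carlitz_T: "\<phi> [:0, 1:] = \<Phi>"
  using cz.eval_pCons[of 0 "[:1:]"] by (simp add: cz.eval_const \<kappa>_def \<iota>_1 \<iota>.zero flip: one_pCons)

lemma carlitz_F_poly: "carlitz_F \<iota> e t (Fract a 1) = \<phi> a"
  by (simp add: carlitz_F_Fract)

lemma carlitz_F_0: "carlitz_F \<iota> e t 0 = 0"
  unfolding Zero_fract_def carlitz_F_poly by simp

lemma carlitz_F_add: "carlitz_F \<iota> e t (x + y) = carlitz_F \<iota> e t x + carlitz_F \<iota> e t y"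
proof -
  obtain a b c d where x: "x = Fract a b" "b \<noteq> 0" and y: "y = Fract c d" "d \<noteq> 0"
    by (metis Fract_cases)
  have "carlitz_F \<iota> e t (x + y) = inverse (\<phi> b * \<phi> d) * (\<phi> a * \<phi> d + \<phi> c * \<phi> b)"
    using x y by (simp add: carlitz_F_Fract cz.eval_add cz.eval_mult)
  also have "\<dots> = inverse (\<phi> b) * \<phi> a + inverse (\<phi> d) * \<phi> c"
    using x y by (intro left_fraction_add) (simp_all add: cz.eval_mult_commute)
  finally show ?thesis using x y by (simp add: carlitz_F_Fract)
qed

lemma carlitz_F_mult: "carlitz_F \<iota> e t (x * y) = carlitz_F \<iota> e t x * carlitz_F \<iota> e t y"
proof -
  obtain a b c d where x: "x = Fract a b" "b \<noteq> 0" and y: "y = Fract c d" "d \<noteq> 0"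
    by (metis Fract_cases)
  have "carlitz_F \<iota> e t (x * y) = inverse (\<phi> b * \<phi> d) * (\<phi> a * \<phi> c)"
    using x y by (simp add: carlitz_F_Fract cz.eval_mult)
  also have "\<dots> = inverse (\<phi> b) * \<phi> a * (inverse (\<phi> d) * \<phi> c)"
    using x y by (intro left_fraction_mult) (simp_all add: cz.eval_mult_commute)
  finally show ?thesis using x y by (simp add: carlitz_F_Fract)
qed

lemma inj_carlitz_F: "inj (carlitz_F \<iota> e t)"
proof (rule injI)
  fix x y assume eq: "carlitz_F \<iota> e t x = carlitz_F \<iota> e t y"
  obtain a b c d where x: "x = Fract a b" "b \<noteq> 0" and y: "y = Fract c d" "d \<noteq> 0"
    by (metis Fract_cases)
  have "\<phi> a * \<phi> d = \<phi> c * \<phi> b"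
    using eq x y left_fraction_eq_iff[of "\<phi> b" "\<phi> d" "\<phi> a" "\<phi> c"]
    by (simp add: carlitz_F_Fract cz.eval_mult_commute)
  then have "a * d = c * b" by (simp add: carlitz_inject flip: cz.eval_mult)
  then show "x = y" using x y by (simp add: eq_fract)
qed

lemma carlitz_F_inverse: "carlitz_F \<iota> e t (inverse x) = inverse (carlitz_F \<iota> e t x)"
proof -
  show ?thesis
  proof (cases x rule: Fract_cases_nonzero)
    case (Fract a b)
    then show ?thesis by (simp add: carlitz_F_Fract nonzero_inverse_mult_distrib)
  qed (simp add: carlitz_F_0)
qed

lemma carlitz_F_commute_\<Phi>: "carlitz_F \<iota> e t x * \<Phi> = \<Phi> * carlitz_F \<iota> e t x"
proof -
  obtain a b where x: "x = Fract a b" "b \<noteq> 0" by (metis Fract_cases)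
  have inv: "inverse (\<phi> b) * \<Phi> = \<Phi> * inverse (\<phi> b)"
    by (rule mult_commute_imp_mult_inverse_commute) (simp add: cz.eval_commute_X)
  have "inverse (\<phi> b) * \<phi> a * \<Phi> = inverse (\<phi> b) * \<Phi> * \<phi> a"
    by (simp only: mult.assoc cz.eval_commute_X)
  also have "\<dots> = \<Phi> * (inverse (\<phi> b) * \<phi> a)"
    by (simp only: inv mult.assoc)
  finally show ?thesis using x by (simp add: carlitz_F_Fract)
qed

lemma intertwiner_deg_lead:
  assumes "w \<in> Ktau" "w \<noteq> 0" "h \<in> Ktau" "w * \<Phi> = h * w"
  shows "tw_deg h = 1" and "tw_lead w = tw_lead h * tw_lead w ^ CARD('q)"
proof -
  have "h \<noteq> 0" using assms(2,4) \<Phi>_nonzero by auto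
  have "tw_deg (w * \<Phi>) = tw_deg w + 1" "tw_lead (w * \<Phi>) = tw_lead w"
    using tw_deg_tw_lead_mult[OF assms(1) \<Phi>_in_Ktau assms(2) \<Phi>_nonzero]
    by (simp_all add: tw_deg_\<Phi> tw_lead_\<Phi>)
  moreover have "tw_deg (h * w) = tw_deg h + tw_deg w"
      "tw_lead (h * w) = tw_lead h * tw_lead w ^ (CARD('q) ^ tw_deg h)"
    using tw_deg_tw_lead_mult[OF assms(3,1) \<open>h \<noteq> 0\<close> assms(2)] by simp_all
  ultimately show "tw_deg h = 1" and "tw_lead w = tw_lead h * tw_lead w ^ CARD('q)"
    using assms(4) by simp_all
qed

(* The leading coefficients of intertwiners satisfy c = tw_lead h * c ^ q, so their ratio is
   fixed by Frobenius and hence a constant of the Carlitz module. *)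
lemma intertwiner_leading_term:
  assumes g: "g \<in> Ktau" "g \<noteq> 0" and h: "h \<in> Ktau" "g * \<Phi> = h * g"
    and y: "y \<in> Ktau" "y \<noteq> 0" "y * \<Phi> = h * y" and deg_le: "tw_deg g \<le> tw_deg y"
  shows "\<exists>a. tw_deg (g * \<phi> a) = tw_deg y \<and> tw_lead (g * \<phi> a) = tw_lead y"
proof -
  define c where "c = tw_lead y / tw_lead g"
  have lead_g: "tw_lead g \<noteq> 0" and "tw_lead y \<noteq> 0" and "tw_lead h \<noteq> 0"
    using tw_lead_eq_0_iff g y intertwiner_deg_lead(2)[OF g h] by auto
  then have "c \<noteq> 0" by (simp add: c_def)
  have "tw_lead y ^ CARD('q) = tw_lead y / tw_lead h"
    using intertwiner_deg_lead(2)[OF y(1,2) h(1) y(3)] \<open>tw_lead h \<noteq> 0\<close>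
    by (simp add: eq_divide_eq mult.commute)
  moreover have "tw_lead g ^ CARD('q) = tw_lead g / tw_lead h"
    using intertwiner_deg_lead(2)[OF g h] \<open>tw_lead h \<noteq> 0\<close>
    by (simp add: eq_divide_eq mult.commute)
  ultimately have "c ^ CARD('q) = c"
    using \<open>tw_lead h \<noteq> 0\<close> by (simp add: c_def power_divide)
  then obtain s where s: "c = \<iota> [:s:]" using power_card_fixed_imp_\<iota>_const by blast
  let ?a = "monom s (tw_deg y - tw_deg g)"
  have "s \<noteq> 0" using s \<open>c \<noteq> 0\<close> by (auto simp: \<iota>_const_eq_0_iff)
  then have "\<phi> ?a \<noteq> 0" "tw_deg (\<phi> ?a) = tw_deg y - tw_deg g" "tw_lead (\<phi> ?a) = c"
    using tw_deg_tw_lead_carlitz[of ?a] s by (simp_all add: degree_monom_eq)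
  then have "tw_deg (g * \<phi> ?a) = tw_deg y \<and> tw_lead (g * \<phi> ?a) = tw_lead y"
    using tw_deg_tw_lead_mult[OF g(1) carlitz_in_Ktau g(2)] deg_le lead_g
      power_power_eq_self[OF \<open>c ^ CARD('q) = c\<close>]
    by (simp add: c_def)
  then show ?thesis ..
qed

lemma intertwiner_division:
  assumes g: "g \<in> Ktau" "g \<noteq> 0" and h: "h \<in> Ktau" "g * \<Phi> = h * g"
  shows "y \<in> Ktau \<Longrightarrow> y * \<Phi> = h * y \<Longrightarrow>
    \<exists>a r. r \<in> Ktau \<and> y = g * \<phi> a + r \<and> r * \<Phi> = h * r \<and> (r = 0 \<or> tw_deg r < tw_deg g)"
proof (induction "tw_deg y" arbitrary: y rule: less_induct)
  case less
  show ?case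
  proof (cases "y = 0 \<or> tw_deg y < tw_deg g")
    case True
    then show ?thesis using less.prems by (intro exI[of _ 0] exI[of _ y]) auto
  next
    case False
    then obtain a0 where a0: "tw_deg (g * \<phi> a0) = tw_deg y" "tw_lead (g * \<phi> a0) = tw_lead y"
      using intertwiner_leading_term[OF g h less.prems(1) _ less.prems(2)] by auto
    have ga0: "g * \<phi> a0 \<in> Ktau" by (rule Ktau_mult[OF g(1) carlitz_in_Ktau])
    have "g * \<phi> a0 * \<Phi> = g * \<Phi> * \<phi> a0"
      by (simp only: mult.assoc cz.eval_commute_X)
    then have "(y - g * \<phi> a0) * \<Phi> = h * (y - g * \<phi> a0)"
      using less.prems(2) by (simp add: h(2) mult.assoc left_diff_distrib right_diff_distrib)
    show ?thesis
    proof (cases "y = g * \<phi> a0")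
      case True
      then show ?thesis by (intro exI[of _ a0] exI[of _ 0]) simp
    next
      case False
      then have "tw_deg (y - g * \<phi> a0) < tw_deg y"
        using tw_deg_diff_less[OF less.prems(1) ga0] a0 by simp
      then obtain a r where "r \<in> Ktau" "y - g * \<phi> a0 = g * \<phi> a + r" "r * \<Phi> = h * r"
          "r = 0 \<or> tw_deg r < tw_deg g"
        using less.hyps Ktau_diff[OF less.prems(1) ga0] \<open>(y - g * \<phi> a0) * \<Phi> = _\<close> by blast
      moreover from this(2) have "y = g * \<phi> (a0 + a) + r"
        by (simp add: cz.eval_add algebra_simps)
      ultimately show ?thesis by blast
    qed
  qed
qed

lemma least_denominator_intertwines:
  assumes z: "z * \<Phi> = \<Phi> * z" and g: "g \<in> Ktau" "g \<noteq> 0" "g * z \<in> Ktau"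
    and least: "\<And>b. b \<in> Ktau \<Longrightarrow> b \<noteq> 0 \<Longrightarrow> b * z \<in> Ktau \<Longrightarrow> tw_deg g \<le> tw_deg b"
  shows "\<exists>h\<in>Ktau. g * \<Phi> = h * g"
proof -
  obtain h r where hr: "h \<in> Ktau" "r \<in> Ktau" "g * \<Phi> = h * g + r" "r = 0 \<or> tw_deg r < tw_deg g"
    using Ktau_right_division[OF g(1,2) Ktau_mult[OF g(1) \<Phi>_in_Ktau]] by blast
  have "r = g * \<Phi> - h * g" using hr(3) by simp
  then have "r * z = g * z * \<Phi> - h * (g * z)" by (simp add: left_diff_distrib mult.assoc z)
  then have "r * z \<in> Ktau" using g(3) hr(1) by (simp add: Ktau_diff Ktau_mult \<Phi>_in_Ktau)
  then have "r = 0" using least[OF hr(2)] hr(4) by fastforce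
  then show ?thesis using hr by auto
qed

lemma commute_\<Phi>_imp_in_range_carlitz_F:
  assumes "z * \<Phi> = \<Phi> * z" "b \<in> Ktau" "b \<noteq> 0" "b * z \<in> Ktau"
  shows "z \<in> range (carlitz_F \<iota> e t)"
  using assms
proof (induction "tw_deg b" arbitrary: z b rule: less_induct)
  case less
  let ?den = "\<lambda>b. b \<in> Ktau \<and> b \<noteq> 0 \<and> b * z \<in> Ktau"
  obtain g where g: "?den g" and least: "\<And>b. ?den b \<Longrightarrow> tw_deg g \<le> tw_deg b"
    using ex_has_least_nat[of ?den b tw_deg] less.prems by blast
  then obtain h where h: "h \<in> Ktau" "g * \<Phi> = h * g"
    using least_denominator_intertwines[OF less.prems(1)] by blast
  have "g * z * \<Phi> = h * (g * z)"
    using less.prems(1) h(2) by (simp add: mult.assoc) (simp flip: mult.assoc)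
  then obtain a r where ar: "r \<in> Ktau" "g * z = g * \<phi> a + r" "r = 0 \<or> tw_deg r < tw_deg g"
    using intertwiner_division[OF _ _ h] g by blast
  show ?case
  proof (cases "r = 0")
    case True
    then have "z = \<phi> a" using ar(2) g by simp
    then show ?thesis by (metis carlitz_F_poly rangeI)
  next
    case False
    define w where "w = inverse (z - \<phi> a)"
    have "g * (z - \<phi> a) = r" using ar(2) by (simp add: right_diff_distrib)
    then have "z - \<phi> a \<noteq> 0" and "r * w = g"
      using False g by (auto simp: w_def mult.assoc)
    have "w * \<Phi> = \<Phi> * w" unfolding w_def
      by (rule mult_commute_imp_mult_inverse_commute)
        (simp add: left_diff_distrib right_diff_distrib less.prems(1) cz.eval_commute_X)
    moreover have "tw_deg r < tw_deg b" using ar(3) False least[of b] less.prems by fastforce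
    ultimately obtain u where "w = carlitz_F \<iota> e t u"
      using less.hyps[of r w] ar(1) False \<open>r * w = g\<close> g by auto
    moreover have "z - \<phi> a = inverse w" by (simp add: w_def)
    ultimately have "z - \<phi> a = carlitz_F \<iota> e t (inverse u)"
      by (simp add: carlitz_F_inverse)
    then have "z = carlitz_F \<iota> e t (Fract a 1 + inverse u)"
      by (simp add: carlitz_F_add carlitz_F_poly diff_eq_eq add.commute)
    then show ?thesis by blast
  qed
qed

lemma commute_\<Phi>_iff: "z * \<Phi> = \<Phi> * z \<longleftrightarrow> z \<in> range (carlitz_F \<iota> e t)"
proof
  assume "z * \<Phi> = \<Phi> * z"
  moreover obtain a b where "a \<in> Ktau" "b \<in> Ktau" "b \<noteq> 0" "z = inverse b * a"
    using left_fraction by blast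
  moreover from this have "b * z = a" by (simp add: mult.assoc[symmetric])
  ultimately show "z \<in> range (carlitz_F \<iota> e t)"
    using commute_\<Phi>_imp_in_range_carlitz_F by metis
qed (auto simp: carlitz_F_commute_\<Phi>)

end

theorem mainTheorem13:
  fixes p n :: nat
    and \<iota> :: "'q::{finite,field} poly \<Rightarrow> 'k::field"
    and e :: "'k \<Rightarrow> 'd::division_ring"
    and t :: 'd
  assumes "prime p" and "CHAR('k) = p"
    and "n > 0" and "card (UNIV :: 'q set) = p ^ n"
    and "\<iota> 1 = 1" and "\<forall>a b. \<iota> (a + b) = \<iota> a + \<iota> b" and "\<forall>a b. \<iota> (a * b) = \<iota> a * \<iota> b"
    and "is_left_twisted_fraction_ring (card (UNIV :: 'q set)) e t"
  shows "dioph_map consts_F 3 (consts_D \<iota> e t) 4 (carlitz_F \<iota> e t)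
       \<and> effective_dioph_map consts_F 3 (consts_D \<iota> e t) 4 (carlitz_F \<iota> e t)"
proof -
  interpret carlitz_setting \<iota> e t
    using assms(5-8) by unfold_locales auto
  have \<Phi>: "consts_D \<iota> e t 2 + consts_D \<iota> e t 3 = \<Phi>"
    by (simp add: consts_D_def \<Phi>_def)
  have "carlitz_F \<iota> e t (consts_F j) = eval_tm (consts_D \<iota> e t) [] (translate_tm (Cst j))"
    if j: "j < 3" for j
  proof -
    consider "j = 0" | "j = 1" | "j = 2" using j by linarith
    then show ?thesis
    proof cases
      case 3
      then show ?thesis by (simp add: consts_F_def carlitz_T_tm_def \<Phi> carlitz_F_poly carlitz_T)
    qed (simp_all add: consts_F_def consts_D_def carlitz_F_0 carlitz_F_poly One_fract_def)
  qed
  moreover have "range (carlitz_F \<iota> e t) = {z. z * \<Phi> = \<Phi> * z}"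
    using commute_\<Phi>_iff by auto
  ultimately show ?thesis
    using carlitz_F_add carlitz_F_mult inj_carlitz_F
    by (intro dioph_map_and_effective_if_range_centralizer) (simp_all add: \<Phi>)
qed

end
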